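(* Let $n\ge 2$ and $u\in\mathcal S_n$ with $p(u^{-1})=(\Delta_1,\ldots,\Delta_{n-1})$, and set $\Delta_n$ to be the empty vector. Let $j$ be the number of indices $i\in[n-1]$ for which there is $d\in\mathbb P$ with $\Delta_i=(d,d,\ldots,d)$ ($n-i$ entries) and $\Delta_{i+1}=(d,\ldots,d)$ ($n-i-1$ entries, the same $d$). Then the super-strong Wilf equivalence class of $u$ in $\mathcal S_n$ has exactly $2^j$ elements.
   Context: $\mathbb P$ is the set of positive integers, $\mathbb P^*$ the set of finite words over $\mathbb P$; $|w|$ is the length and $\|w\|=w_1+\cdots+w_n$ the norm of $w=w_1\cdots w_n$. $\mathcal S_n$ is the set of permutations of $[n]=\{1,\ldots,n\}$ written as words. Generalized factor order: for $u,w\in\mathbb P^*$, an index $j$ is an embedding index of $u$ into $w$ if $j+|u|-1\le|w|$ and $u_k\le w_{j+k-1}$ for all $k\in[|u|]$; $Em(u,w)$ is the set of all embedding indices. A bijection $f:\mathbb P^*\to\mathbb P^*$ is weight-preserving if $|f(w)|=|w|$ and $\|f(w)\|=\|w\|$ for all $w$. Words $u,v$ are super-strongly Wilf equivalent ($u\sim_{ss}v$) if there is a weight-preserving bijection $f$ with $Em(u,w)=Em(v,f(w))$ for all $w\in\mathbb P^*$. For a finite set $X=\{x_1<\cdots<x_k\}\subset\mathbb P$, $\Delta(X)=(x_2-x_1,\ldots,x_k-x_{k-1})$; for $s=s_1\cdots s_n\in\mathcal S_n$ and $i\in[n-1]$, $\Delta_i(s)=\Delta(\{s_i,\ldots,s_n\})$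 and $p(s)=(\Delta_1(s),\ldots,\Delta_{n-1}(s))$. (Known fact, usable: for $u,v\in\mathcal S_n$, $u\sim_{ss}v$ iff $p(u^{-1})=p(v^{-1})$.) *)

theory Defs
  imports Main
begin

definition pwords :: "nat list set" where
  "pwords = {w. \<forall>x\<in>set w. 0 < x}"

definition wnorm :: "nat list \<Rightarrow> nat" where
  "wnorm w = sum_list w"

text \<open>Embedding indices (1-based, as in the paper).\<close>
definition Em :: "nat list \<Rightarrow> nat list \<Rightarrow> nat set" where
  "Em u w = {j. 1 \<le> j \<and> j + length u - 1 \<le> length w \<and>
                (\<forall>k\<in>{1..length u}. u ! (k - 1) \<le> w ! (j + k - 2))}"

definition weight_preserving :: "(nat list \<Rightarrow> nat list) \<Rightarrow> bool" where
  "weight_preserving f \<longleftrightarrow> bij_betw f pwords pwords \<and>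
     (\<forall>w\<in>pwords. length (f w) = length w \<and> wnorm (f w) = wnorm w)"

definition ss_wilf :: "nat list \<Rightarrow> nat list \<Rightarrow> bool" where
  "ss_wilf u v \<longleftrightarrow> (\<exists>f. weight_preserving f \<and> (\<forall>w\<in>pwords. Em u w = Em v (f w)))"

definition perms :: "nat \<Rightarrow> nat list set" where
  "perms n = {s. length s = n \<and> distinct s \<and> set s = {1..n}}"

definition perm_inv :: "nat list \<Rightarrow> nat list" where
  "perm_inv s = map (\<lambda>k. (THE i. i < length s \<and> s ! i = k) + 1) [1..<length s + 1]"

definition Delta :: "nat set \<Rightarrow> nat list" where
  "Delta X = (let xs = sorted_list_of_set X in
               map (\<lambda>i. xs ! (i + 1) - xs ! i) [0..<length xs - 1])"

definition Delta_i :: "nat list \<Rightarrow> nat \<Rightarrow> nat list" where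
  "Delta_i s i = Delta (set (drop (i - 1) s))"

definition pvec :: "nat list \<Rightarrow> nat list list" where
  "pvec s = map (Delta_i s) [1..<length s]"

end

theory Submission
  imports Defs "HOL-Combinatorics.Multiset_Permutations"
begin

text \<open>Let \<open>S\<^sub>m(u)\<close> be the set of positions of the letters \<open>\<ge> m\<close> of \<open>u\<close>, so that
  \<open>\<Delta>\<^sub>m(u\<^sup>-\<^sup>1)\<close> lists the gaps of \<open>S\<^sub>m(u)\<close>. Then \<open>v\<close> is super-strongly Wilf equivalent to \<open>u\<close>
  iff every \<open>S\<^sub>m(v)\<close> is a translate of \<open>S\<^sub>m(u)\<close>. Sufficiency goes letter by letter: if, after
  translating \<open>S\<^sub>m(v)\<close> onto \<open>S\<^sub>m(u)\<close>, the letter \<open>m\<close> sits at different places in \<open>u\<close> and \<open>v\<close>,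
  then \<open>S\<^sub>m(u)\<close> is an arithmetic progression with these places as its ends, and cyclically
  rotating the runs of large letters of a word along the progression is a weight-preserving
  bijection exchanging the two embedding conditions. Necessity compares the norms of the least
  words with a prescribed set of embedding indices, which are inclusion-exclusion sums of
  overlaps of translates of the \<open>S\<^sub>m\<close>, and inverts them.

  Choosing the positions of the letters \<open>1, 2, \<dots>, n\<close> of \<open>v\<close> one after the other, the letter
  \<open>m\<close> has two admissible places exactly when \<open>S\<^sub>m(u)\<close> is an arithmetic progression and the
  position of \<open>m\<close> in \<open>u\<close> is one of its ends, that is, when \<open>\<Delta>\<^sub>m\<close> and \<open>\<Delta>\<^sub>m\<^sub>+\<^sub>1\<close> are constant
  with the same value; otherwise it has one.\<close>

section \<open>Translates of finite sets of naturals\<close>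

definition translates :: "nat set \<Rightarrow> nat set \<Rightarrow> bool" where
  "translates X Y \<longleftrightarrow> (\<exists>a b. (\<lambda>x. x + a) ` X = (\<lambda>x. x + b) ` Y)"

lemma translates_refl: "translates X X"
  unfolding translates_def by blast

lemma translates_sym: "translates X Y \<Longrightarrow> translates Y X"
  unfolding translates_def by metis

lemma translates_trans:
  assumes "translates X Y" "translates Y Z"
  shows "translates X Z"
proof -
  obtain a b where ab: "(\<lambda>x. x + a) ` X = (\<lambda>x. x + b) ` Y"
    using assms(1) unfolding translates_def by blast
  obtain c d where cd: "(\<lambda>x. x + c) ` Y = (\<lambda>x. x + d) ` Z"
    using assms(2) unfolding translates_def by blast
  have "(\<lambda>x. x + (a + c)) ` X = (\<lambda>x. x + c) ` ((\<lambda>x. x + a) ` X)"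
    by (simp add: image_image add.assoc)
  also have "\<dots> = (\<lambda>x. x + b) ` ((\<lambda>x. x + c) ` Y)"
    unfolding ab by (simp add: image_image algebra_simps)
  also have "\<dots> = (\<lambda>x. x + (b + d)) ` Z"
    unfolding cd by (simp add: image_image algebra_simps)
  finally show ?thesis unfolding translates_def by blast
qed

lemma translates_image_add: "translates ((\<lambda>z. z + d) ` X) X"
  unfolding translates_def by (intro exI[of _ 0] exI[of _ d]) (simp add: image_image)

lemma translates_image_diff:
  assumes "\<forall>z\<in>X. d \<le> z"
  shows "translates ((\<lambda>z. z - d) ` X) X"
proof -
  have "(\<lambda>z. z + d) ` (\<lambda>z. z - d) ` X = (\<lambda>z. z + 0) ` X"
    using assms by (force simp: image_image)
  then show ?thesis unfolding translates_def by blast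
qed

lemma translates_finite:
  assumes "translates X Y" "finite X"
  shows "finite Y"
proof -
  obtain a b where "(\<lambda>x. x + a) ` X = (\<lambda>x. x + b) ` Y"
    using assms(1) unfolding translates_def by blast
  then have "finite ((\<lambda>x. x + b) ` Y)" using assms(2) by (metis finite_imageI)
  then show ?thesis by (rule finite_imageD) simp
qed

lemma translates_empty: "translates {} Y \<Longrightarrow> Y = {}"
  unfolding translates_def by auto

lemma image_add_eq_imp_shift:
  fixes A B :: "nat set"
  assumes "(\<lambda>x. x + a) ` A = (\<lambda>x. x + b) ` B" "b \<le> a"
  shows "B = (\<lambda>x. x + (a - b)) ` A"
proof -
  have "(\<lambda>x. x + b) ` B = (\<lambda>x. x + b) ` ((\<lambda>x. x + (a - b)) ` A)"
    using assms by (simp add: image_image algebra_simps)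
  then show ?thesis by (simp add: inj_image_eq_iff)
qed

lemma image_add_remove:
  fixes X Y :: "nat set"
  assumes "(\<lambda>x. x + a) ` X = (\<lambda>x. x + b) ` Y" "z \<in> X"
  shows "(\<lambda>x. x + a) ` (X - {z}) = (\<lambda>x. x + b) ` (Y - {z + a - b})"
proof -
  have "z + a \<in> (\<lambda>x. x + b) ` Y" using assms by blast
  then obtain y where y: "y \<in> Y" "z + a = y + b" by blast
  have "(\<lambda>x. x + a) ` (X - {z}) = (\<lambda>x. x + a) ` X - {z + a}" by (auto simp: inj_on_def)
  also have "\<dots> = (\<lambda>x. x + b) ` Y - {y + b}" using assms(1) y by simp
  also have "\<dots> = (\<lambda>x. x + b) ` (Y - {y})" by (auto simp: inj_on_def)
  finally show ?thesis using y by simp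
qed

section \<open>Arithmetic progressions\<close>

definition progression :: "nat \<Rightarrow> nat \<Rightarrow> nat \<Rightarrow> nat set" where
  "progression a d k = (\<lambda>i. a + i * d) ` {..<k}"

definition progression_end :: "nat set \<Rightarrow> nat \<Rightarrow> bool" where
  "progression_end X x \<longleftrightarrow>
     (\<exists>a d N. 0 < d \<and> 1 \<le> N \<and> X = progression a d (Suc N) \<and> (x = a \<or> x = a + N * d))"

lemma progression_iff: "z \<in> progression a d k \<longleftrightarrow> (\<exists>i<k. z = a + i * d)"
  unfolding progression_def by auto

lemma card_progression: "0 < d \<Longrightarrow> card (progression a d k) = k"
  unfolding progression_def by (subst card_image) (auto simp: inj_on_def)

lemma progression_remove_last:
  "0 < d \<Longrightarrow> progression a d (Suc N) - {a + N * d} = progression a d N"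
  unfolding progression_def by (auto simp: less_Suc_eq)

lemma progression_remove_first:
  assumes "0 < d"
  shows "progression a d (Suc N) - {a} = progression (a + d) d N"
proof -
  have "progression a d (Suc N) = insert a (progression (a + d) d N)"
    unfolding progression_def lessThan_Suc_eq_insert_0 by (simp add: image_image algebra_simps)
  moreover have "a \<notin> progression (a + d) d N" using assms by (auto simp: progression_iff)
  ultimately show ?thesis by simp
qed

lemma progression_Suc: "progression b d (Suc N) = insert (b + N * d) (progression b d N)"
  unfolding progression_def by (simp add: lessThan_Suc)

lemma progression_Suc_shift:
  "progression b d (Suc N) = insert b ((\<lambda>q. q + d) ` progression b d N)"
  unfolding progression_def lessThan_Suc_eq_insert_0 by (simp add: image_image algebra_simps)

lemma progression_spread:
  assumes "z \<in> progression a d k" "w \<in> progression a d k"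
  shows "w + d \<le> z + k * d"
proof -
  obtain i j where "i < k" "z = a + i * d" "j < k" "w = a + j * d"
    using assms by (auto simp: progression_iff)
  moreover have "Suc j * d \<le> k * d" using \<open>j < k\<close> by (intro mult_le_mono1) simp
  ultimately show ?thesis by (simp add: algebra_simps)
qed

lemma sorted_list_of_progression:
  "0 < d \<Longrightarrow> sorted_list_of_set (progression a d k) = map (\<lambda>i. a + i * d) [0..<k]"
  by (rule sorted_list_of_set_unique[THEN iffD1])
    (auto simp: sorted_wrt_iff_nth_less progression_def card_image inj_on_def)

lemma Delta_progression:
  "0 < d \<Longrightarrow> Delta (progression a d k) = replicate (k - 1) d"
  unfolding Delta_def Let_def sorted_list_of_progression
  by (intro nth_equalityI) (simp_all add: algebra_simps less_diff_conv)

lemma Delta_replicate_imp_progression: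
  assumes fin: "finite X" and D: "Delta X = replicate (card X - 1) d"
  shows "X = progression (Min X) d (card X)"
proof (cases "X = {}")
  case False
  define xs where "xs = sorted_list_of_set X"
  have len: "length xs = card X" and srt: "sorted_wrt (<) xs" and st: "set xs = X"
    using fin unfolding xs_def by auto
  have step: "xs ! Suc i = xs ! i + d" if "Suc i < card X" for i
  proof -
    have "i < card X - 1" using that by simp
    then have "Delta X ! i = xs ! Suc i - xs ! i"
      using len unfolding Delta_def Let_def xs_def[symmetric] by simp
    moreover have "xs ! i < xs ! Suc i"
      using srt that len by (simp add: sorted_wrt_iff_nth_less)
    ultimately show ?thesis using D that by simp
  qed
  have gen: "i < card X \<Longrightarrow> xs ! i = xs ! 0 + i * d" for i
    by (induction i) (simp_all add: step)
  have "xs ! 0 = Min X"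
    using False fin unfolding xs_def by (simp add: sorted_list_of_set_nonempty)
  moreover have "X = (\<lambda>i. xs ! i) ` {..<length xs}"
    unfolding st[symmetric] by (auto simp: in_set_conv_nth)
  ultimately show ?thesis unfolding progression_def len using gen by (auto intro!: image_cong)
qed (simp add: progression_def)

lemma shift_closed_imp_progression:
  assumes d: "0 < d" and m: "m \<in> X" "\<forall>z\<in>X. m \<le> z" and M: "M \<in> X" "\<forall>z\<in>X. z \<le> M"
    and up: "\<And>z. z \<in> X \<Longrightarrow> z \<noteq> M \<Longrightarrow> z + d \<in> X"
    and down: "\<And>z. z \<in> X \<Longrightarrow> z \<noteq> m \<Longrightarrow> \<exists>z'\<in>X. z = z' + d"
  shows "\<exists>N. M = m + N * d \<and> X = progression m d (Suc N)"
proof -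
  have on_grid: "\<exists>i. z = m + i * d" if "z \<in> X" for z
    using that
  proof (induction z rule: less_induct)
    case (less z)
    show ?case
    proof (cases "z = m")
      case False
      then obtain z' where "z' \<in> X" "z = z' + d" using down less.prems by blast
      moreover then obtain i where "z' = m + i * d" using less.IH d by fastforce
      ultimately show ?thesis by (intro exI[of _ "Suc i"]) simp
    qed simp
  qed
  obtain N where N: "M = m + N * d" using on_grid M(1) by blast
  have in_X: "i \<le> N \<Longrightarrow> m + i * d \<in> X" for i
  proof (induction i)
    case (Suc i)
    then have "m + i * d \<in> X" "m + i * d \<noteq> M" using N d by simp_all
    then have "m + i * d + d \<in> X" using up by blast
    then show ?case by (simp add: algebra_simps)
  qed (use m in simp)
  have "X \<subseteq> progression m d (Suc N)"
  proof
    fix z assume z: "z \<in> X"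
    then obtain i where i: "z = m + i * d" using on_grid by blast
    then have "i * d \<le> N * d" using M(2) z N by auto
    then have "i \<le> N" using d by simp
    then show "z \<in> progression m d (Suc N)" using i d by (auto simp: progression_iff)
  qed
  moreover have "progression m d (Suc N) \<subseteq> X" using in_X by (auto simp: progression_iff)
  ultimately show ?thesis using N by blast
qed

lemma shift_removal_imp_progression:
  assumes fin: "finite X" and xy: "x \<in> X" "y \<in> X" "x \<noteq> y"
    and shift: "X - {y} = (\<lambda>z. z + \<delta>) ` (X - {x})"
  shows "0 < \<delta> \<and> (\<exists>N\<ge>1. X = progression y \<delta> (Suc N) \<and> x = y + N * \<delta>)"
proof -
  have d: "0 < \<delta>"
  proof (rule ccontr)
    assume "\<not> 0 < \<delta>"
    then have "X - {y} = X - {x}" using shift by simp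
    then show False using xy by blast
  qed
  have ne: "X \<noteq> {}" using xy by blast
  have y_min: "\<forall>z\<in>X. y \<le> z"
  proof
    fix z assume "z \<in> X"
    show "y \<le> z"
    proof (rule ccontr)
      assume "\<not> y \<le> z"
      then have "Min X \<in> X - {y}" using \<open>z \<in> X\<close> fin ne Min_le[OF fin \<open>z \<in> X\<close>] by auto
      then obtain w where "w \<in> X" "Min X = w + \<delta>" using shift by blast
      then show False using Min_le[OF fin \<open>w \<in> X\<close>] d by simp
    qed
  qed
  have x_max: "\<forall>z\<in>X. z \<le> x"
  proof
    fix z assume "z \<in> X"
    show "z \<le> x"
    proof (rule ccontr)
      assume "\<not> z \<le> x"
      then have "Max X \<in> X - {x}" using \<open>z \<in> X\<close> fin ne Max_ge[OF fin \<open>z \<in> X\<close>] by auto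
      then have "Max X + \<delta> \<in> X" using shift by blast
      then show False using Max_ge[OF fin \<open>Max X + \<delta> \<in> X\<close>] d by simp
    qed
  qed
  have "\<exists>N. x = y + N * \<delta> \<and> X = progression y \<delta> (Suc N)"
    by (rule shift_closed_imp_progression[OF d xy(2) y_min xy(1) x_max]) (use shift in auto)
  then obtain N where "x = y + N * \<delta>" "X = progression y \<delta> (Suc N)" by blast
  moreover have "N \<noteq> 0" using calculation xy(3) by auto
  ultimately show ?thesis using d by auto
qed

lemma translates_removals_imp_progression_end:
  assumes fin: "finite X" and xy: "x \<in> X" "y \<in> X" "x \<noteq> y"
    and tr: "translates (X - {x}) (X - {y})"
  shows "progression_end X x"
proof -
  obtain a b where ab: "(\<lambda>z. z + a) ` (X - {x}) = (\<lambda>z. z + b) ` (X - {y})"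
    using tr unfolding translates_def by blast
  show ?thesis
  proof (cases "b \<le> a")
    case True
    then have "X - {y} = (\<lambda>z. z + (a - b)) ` (X - {x})" using image_add_eq_imp_shift ab by blast
    from shift_removal_imp_progression[OF fin xy this] show ?thesis
      unfolding progression_end_def by blast
  next
    case False
    then have "X - {x} = (\<lambda>z. z + (b - a)) ` (X - {y})"
      using image_add_eq_imp_shift[OF ab[symmetric]] by simp
    from shift_removal_imp_progression[OF fin xy(2,1) xy(3)[symmetric] this] show ?thesis
      unfolding progression_end_def by (metis add_0_right mult_0)
  qed
qed

lemma Min_progression: "Min (progression a d (Suc N)) = a"
  unfolding progression_def by (rule Min_eqI) auto

lemma Max_progression: "0 < d \<Longrightarrow> Max (progression a d (Suc N)) = a + N * d"
  unfolding progression_def by (rule Max_eqI) (auto simp: less_Suc_eq_le)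

lemma progression_end_Min_Max: "progression_end X x \<Longrightarrow> x = Min X \<or> x = Max X"
  unfolding progression_end_def using Min_progression Max_progression by metis

lemma progression_end_card: "progression_end X x \<Longrightarrow> 2 \<le> card X"
  unfolding progression_end_def using card_progression by fastforce

lemma progression_end_partner:
  assumes "progression_end X x"
  shows "\<exists>y\<in>X. y \<noteq> x \<and> translates (X - {x}) (X - {y})"
proof -
  obtain a d N where d: "0 < d" "1 \<le> N" and X: "X = progression a d (Suc N)"
    and x: "x = a \<or> x = a + N * d"
    using assms unfolding progression_end_def by blast
  have ends: "a \<in> X" "a + N * d \<in> X" "a \<noteq> a + N * d"
    unfolding X using d by (auto simp: progression_iff)
  have "progression (a + d) d N = (\<lambda>z. z + d) ` progression a d N"
    unfolding progression_def by (simp add: image_image algebra_simps)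
  then have "translates (X - {a}) (X - {a + N * d})"
    unfolding X progression_remove_first[OF d(1)] progression_remove_last[OF d(1)]
    by (simp add: translates_image_add)
  then show ?thesis using x ends translates_sym by metis
qed

lemma translated_removals_ends:
  assumes fin: "finite X" and xy: "x \<in> X" "y \<in> X" "x \<noteq> y"
    and tr: "translates (X - {x}) (X - {y})"
  obtains a d N where "0 < d" "1 \<le> N" "X = progression a d (Suc N)"
    "x = a \<and> y = a + N * d \<or> x = a + N * d \<and> y = a"
proof -
  have ends: "progression_end X x" "progression_end X y"
    using translates_removals_imp_progression_end[OF fin] xy tr translates_sym by blast+
  obtain a d N where d: "0 < d" "1 \<le> N" and X: "X = progression a d (Suc N)"
    and x: "x = a \<or> x = a + N * d"
    using ends(1) unfolding progression_end_def by blast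
  have "y = a \<or> y = a + N * d"
    using progression_end_Min_Max[OF ends(2)] X Min_progression Max_progression[OF d(1)] by simp
  then show ?thesis using that d X x xy(3) by blast
qed

definition removal_partners :: "nat set \<Rightarrow> nat \<Rightarrow> nat set" where
  "removal_partners X x = {y \<in> X. translates (X - {x}) (X - {y})}"

lemma card_removal_partners:
  assumes fin: "finite X" and x: "x \<in> X"
  shows "card (removal_partners X x) = (if progression_end X x then 2 else 1)"
proof -
  have x_in: "x \<in> removal_partners X x"
    using x translates_refl unfolding removal_partners_def by blast
  have ends: "progression_end X y" if "y \<in> removal_partners X x" "y \<noteq> x" for y
  proof -
    have "y \<in> X" "translates (X - {y}) (X - {x})"
      using that translates_sym unfolding removal_partners_def by auto
    then show ?thesis using translates_removals_imp_progression_end[OF fin _ x] that(2) by blast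
  qed
  show ?thesis
  proof (cases "progression_end X x")
    case True
    then obtain y where y: "y \<in> removal_partners X x" "y \<noteq> x"
      using progression_end_partner unfolding removal_partners_def by blast
    have "removal_partners X x \<subseteq> {Min X, Max X}"
      using ends True progression_end_Min_Max by blast
    then have "card (removal_partners X x) \<le> card {Min X, Max X}" by (rule card_mono[rotated]) simp
    also have "\<dots> \<le> 2" by (cases "Min X = Max X") simp_all
    finally have "card (removal_partners X x) \<le> 2" .
    moreover have "card {x, y} \<le> card (removal_partners X x)"
      using x_in y fin unfolding removal_partners_def by (intro card_mono) auto
    moreover have "card {x, y} = 2" using y(2) by simp
    ultimately have "card (removal_partners X x) = 2" by linarith
    with True show ?thesis by (simp only: if_True)
  next
    case False
    have "removal_partners X x = {x}"
    proof
      show "removal_partners X x \<subseteq> {x}"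
        using translates_removals_imp_progression_end[OF fin x] False
        unfolding removal_partners_def by blast
    qed (use x_in in simp)
    then show ?thesis using False by simp
  qed
qed

lemma progression_end_iff_Delta:
  assumes fin: "finite X" and x: "x \<in> X" and two: "2 \<le> card X"
  shows "progression_end X x \<longleftrightarrow>
    (\<exists>d>0. Delta X = replicate (card X - 1) d \<and> Delta (X - {x}) = replicate (card X - 2) d)"
proof
  assume "progression_end X x"
  then obtain a d N where d: "0 < d" and X: "X = progression a d (Suc N)"
    and x: "x = a \<or> x = a + N * d"
    unfolding progression_end_def by blast
  have "card X = Suc N" using X card_progression d by simp
  moreover have "\<exists>c. X - {x} = progression c d N"
    using x progression_remove_first[OF d] progression_remove_last[OF d] X by blast
  ultimately show "\<exists>d>0. Delta X = replicate (card X - 1) d \<and> Delta (X - {x}) = replicate (card X - 2) d"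
    using X d Delta_progression by auto
next
  assume "\<exists>d>0. Delta X = replicate (card X - 1) d \<and> Delta (X - {x}) = replicate (card X - 2) d"
  then obtain d where d: "0 < d" "Delta X = replicate (card X - 1) d"
    "Delta (X - {x}) = replicate (card X - 2) d" by blast
  define k where "k = card X - 1"
  have k: "card X = Suc k" "1 \<le> k" using two unfolding k_def by auto
  define a where "a = Min X"
  have X: "X = progression a d (Suc k)"
    using Delta_replicate_imp_progression[OF fin d(2)] k unfolding a_def by simp
  have "card (X - {x}) = k" using fin x k by simp
  then have X': "X - {x} = progression (Min (X - {x})) d k"
    using Delta_replicate_imp_progression[of "X - {x}" d] fin d(3) k by simp
  have "x = a \<or> x = a + k * d"
  proof (rule ccontr)
    assume "\<not> (x = a \<or> x = a + k * d)"
    then have "a \<in> X - {x}" "a + k * d \<in> X - {x}"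
      unfolding X by (auto simp: progression_iff)
    then have "a + k * d + d \<le> a + k * d" using progression_spread X' by metis
    then show False using d(1) by simp
  qed
  then show "progression_end X x"
    unfolding progression_end_def using d(1) k(2) X by blast
qed

section \<open>Permutations and their upper sets\<close>

definition position :: "nat list \<Rightarrow> nat \<Rightarrow> nat" where
  "position u k = (THE i. i < length u \<and> u ! i = k)"

definition positions :: "nat list \<Rightarrow> nat list" where
  "positions u = map (position u) [1..<length u + 1]"

definition upper_set :: "nat list \<Rightarrow> nat \<Rightarrow> nat set" where
  "upper_set u m = {x. x < length u \<and> m \<le> u ! x}"

lemma perm_inv_eq_positions: "perm_inv u = map Suc (positions u)"
  unfolding perm_inv_def positions_def position_def by simp

lemma perms_eq_permutations_of_set: "perms n = permutations_of_set {1..n}"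
  unfolding perms_def permutations_of_set_def
  by (metis (no_types, lifting) card_atLeastAtMost diff_Suc_1 distinct_card)

lemma length_perm: "u \<in> perms n \<Longrightarrow> length u = n"
  unfolding perms_def by simp

lemma nth_perm_bounds:
  assumes "u \<in> perms n" "x < n"
  shows "1 \<le> u ! x \<and> u ! x \<le> n"
proof -
  have "u ! x \<in> set u" using assms by (simp add: length_perm)
  then show ?thesis using assms(1) unfolding perms_def by simp
qed

lemma position_nth:
  assumes u: "u \<in> perms n" and x: "x < n"
  shows "position u (u ! x) = x"
  unfolding position_def
  by (rule the_equality) (use u x in \<open>auto simp: perms_def nth_eq_iff_index_eq\<close>)

lemma position_bounds:
  assumes u: "u \<in> perms n" and m: "1 \<le> m" "m \<le> n"
  shows "position u m < n \<and> u ! position u m = m"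
proof -
  have "m \<in> set u" using u m unfolding perms_def by simp
  then obtain x where "x < n" "u ! x = m"
    using length_perm[OF u] by (auto simp: in_set_conv_nth)
  then show ?thesis using position_nth[OF u] by metis
qed

lemma length_positions: "length (positions u) = length u"
  unfolding positions_def by (simp del: upt_Suc)

lemma nth_positions: "i < length u \<Longrightarrow> positions u ! i = position u (Suc i)"
  unfolding positions_def by (simp del: upt_Suc)

lemma set_drop_positions:
  assumes u: "u \<in> perms n"
  shows "set (drop k (positions u)) = upper_set u (Suc k)"
proof -
  have n: "length u = n" using length_perm[OF u] .
  have "set (drop k (positions u)) = position u ` {Suc k..n}"
    unfolding positions_def n by (simp add: drop_map atLeastLessThanSuc_atLeastAtMost del: upt_Suc)
  also have "\<dots> = upper_set u (Suc k)"
  proof (intro equalityI subsetI)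
    fix z assume "z \<in> position u ` {Suc k..n}"
    then show "z \<in> upper_set u (Suc k)"
      using position_bounds[OF u] n unfolding upper_set_def by fastforce
  next
    fix z assume "z \<in> upper_set u (Suc k)"
    then have z: "z < n" "Suc k \<le> u ! z" using n unfolding upper_set_def by auto
    then have "z = position u (u ! z)" "u ! z \<in> {Suc k..n}"
      using position_nth[OF u z(1)] nth_perm_bounds[OF u z(1)] by auto
    then show "z \<in> position u ` {Suc k..n}" by blast
  qed
  finally show ?thesis .
qed

lemma upper_set_one: "u \<in> perms n \<Longrightarrow> upper_set u 1 = {..<n}"
  using nth_perm_bounds length_perm unfolding upper_set_def by fastforce

lemma card_upper_set:
  assumes u: "u \<in> perms n" and m: "1 \<le> m"
  shows "card (upper_set u m) = n + 1 - m"
proof -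
  have "upper_set u m = set (drop (m - 1) (positions u))"
    using set_drop_positions[OF u, of "m - 1"] m by simp
  moreover have "set (positions u) = {..<n}"
    using set_drop_positions[OF u, of 0] upper_set_one[OF u] by simp
  moreover have "length (positions u) = n"
    using length_positions length_perm[OF u] by simp
  ultimately show ?thesis using m by (simp add: distinct_card card_distinct)
qed

lemma positions_in_permutations:
  assumes u: "u \<in> perms n"
  shows "positions u \<in> permutations_of_set {..<n}"
proof
  show "set (positions u) = {..<n}"
    using set_drop_positions[OF u, of 0] upper_set_one[OF u] by simp
  then show "distinct (positions u)"
    using length_positions length_perm[OF u] by (simp add: card_distinct)
qed

lemma positions_injective: "inj_on positions (perms n)"
proof
  fix u v assume u: "u \<in> perms n" and v: "v \<in> perms n" and eq: "positions u = positions v"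
  have "upper_set u m = upper_set v m" if "1 \<le> m" for m
    using set_drop_positions[OF u, of "m - 1"] set_drop_positions[OF v, of "m - 1"] eq that by simp
  then have le: "a ! x \<le> b ! x"
    if "a \<in> {u, v}" "b \<in> {u, v}" "x < n" for a b x
    using that u v nth_perm_bounds[of _ n x] length_perm[of _ n]
    unfolding upper_set_def by (metis (no_types, lifting) insertE mem_Collect_eq order_refl singletonD)
  show "u = v"
    by (rule nth_equalityI) (use le length_perm[OF u] length_perm[OF v] in \<open>auto intro: order_antisym\<close>)
qed

lemma positions_image: "positions ` perms n = permutations_of_set {..<n}"
proof (rule card_subset_eq)
  show "positions ` perms n \<subseteq> permutations_of_set {..<n}"
    using positions_in_permutations by blast
  show "card (positions ` perms n) = card (permutations_of_set {..<n})"
    using card_image[OF positions_injective] by (simp add: perms_eq_permutations_of_set)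
qed simp

lemma Delta_Suc_image: "finite X \<Longrightarrow> Delta (Suc ` X) = Delta X"
proof -
  assume "finite X"
  then have "sorted_list_of_set (Suc ` X) = map Suc (sorted_list_of_set X)"
    by (intro sorted_list_of_set_unique[THEN iffD1]) (simp_all add: sorted_wrt_map card_image)
  then show ?thesis unfolding Delta_def Let_def by simp
qed

lemma pvec_perm_inv:
  assumes u: "u \<in> perms n" and i: "1 \<le> i" "i < n"
  shows "pvec (perm_inv u) ! (i - 1) = Delta (upper_set u i)"
proof -
  have "[1..<n] ! (i - 1) = i" using i by simp
  then have "pvec (perm_inv u) ! (i - 1) = Delta (set (drop (i - 1) (map Suc (positions u))))"
    using i length_perm[OF u] length_positions[of u]
    unfolding pvec_def Delta_i_def perm_inv_eq_positions by simp
  also have "\<dots> = Delta (Suc ` upper_set u i)"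
    using set_drop_positions[OF u, of "i - 1"] i by (simp add: drop_map)
  finally show ?thesis by (simp add: Delta_Suc_image upper_set_def)
qed

section \<open>Super-strong equivalence of patterns\<close>

definition embeddings :: "nat \<Rightarrow> (nat \<Rightarrow> nat) \<Rightarrow> nat list \<Rightarrow> nat set" where
  "embeddings n P w = {i. i + n \<le> length w \<and> (\<forall>x<n. P x \<le> w ! (i + x))}"

definition ss_equiv :: "nat \<Rightarrow> (nat \<Rightarrow> nat) \<Rightarrow> (nat \<Rightarrow> nat) \<Rightarrow> bool" where
  "ss_equiv n P Q \<longleftrightarrow>
     (\<exists>f. weight_preserving f \<and> (\<forall>w\<in>pwords. embeddings n P w = embeddings n Q (f w)))"

lemma weight_preservingD:
  assumes "weight_preserving f" "w \<in> pwords"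
  shows "f w \<in> pwords" "length (f w) = length w" "wnorm (f w) = wnorm w"
  using assms unfolding weight_preserving_def bij_betw_def by auto

lemma weight_preserving_id: "weight_preserving id"
  unfolding weight_preserving_def by simp

lemma weight_preserving_comp:
  assumes f: "weight_preserving f" and g: "weight_preserving g"
  shows "weight_preserving (g \<circ> f)"
  using bij_betw_trans[of f pwords pwords g pwords] weight_preservingD[OF f] weight_preservingD[OF g] f g
  unfolding weight_preserving_def by auto

lemma weight_preserving_inv:
  assumes f: "weight_preserving f"
  shows "weight_preserving (inv_into pwords f)"
proof -
  have bij: "bij_betw f pwords pwords" using f unfolding weight_preserving_def by blast
  then have bij': "bij_betw (inv_into pwords f) pwords pwords" by (rule bij_betw_inv_into)
  have "f (inv_into pwords f w) = w" if "w \<in> pwords" for w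
    using bij that by (simp add: bij_betw_inv_into_right)
  then show ?thesis
    using weight_preservingD[OF f] bij' bij_betwE[OF bij'] unfolding weight_preserving_def by metis
qed

lemma weight_preserving_if_inj:
  assumes maps: "\<And>w. w \<in> pwords \<Longrightarrow> f w \<in> pwords \<and> length (f w) = length w \<and> wnorm (f w) = wnorm w"
    and inj: "inj_on f pwords"
  shows "weight_preserving f"
proof -
  have "w \<in> f ` pwords" if w: "w \<in> pwords" for w
  proof -
    define A where "A = {v \<in> pwords. length v = length w \<and> wnorm v = wnorm w}"
    have "A \<subseteq> {v. set v \<subseteq> {0..wnorm w} \<and> length v = length w}"
      unfolding A_def wnorm_def by (auto dest: member_le_sum_list)
    then have "finite A" using finite_lists_length_eq[of "{0..wnorm w}"] finite_subset by blast
    moreover have "f ` A \<subseteq> A" "inj_on f A" using maps inj_on_subset[OF inj] unfolding A_def by auto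
    ultimately have "f ` A = A" using endo_inj_surj by blast
    then show ?thesis using w unfolding A_def by blast
  qed
  then show ?thesis using maps inj unfolding weight_preserving_def bij_betw_def by blast
qed

lemma ss_equiv_refl: "ss_equiv n P P"
  unfolding ss_equiv_def using weight_preserving_id by fastforce

lemma ss_equiv_sym:
  assumes "ss_equiv n P Q"
  shows "ss_equiv n Q P"
proof -
  obtain f where f: "weight_preserving f" "\<forall>w\<in>pwords. embeddings n P w = embeddings n Q (f w)"
    using assms unfolding ss_equiv_def by blast
  have bij: "bij_betw f pwords pwords" using f(1) unfolding weight_preserving_def by blast
  have "embeddings n Q w = embeddings n P (inv_into pwords f w)" if "w \<in> pwords" for w
    using f(2) bij_betw_inv_into_right[OF bij that] bij_betwE[OF bij_betw_inv_into[OF bij]] that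
    by metis
  then show ?thesis unfolding ss_equiv_def using weight_preserving_inv[OF f(1)] by blast
qed

lemma ss_equiv_trans:
  assumes "ss_equiv n P Q" "ss_equiv n Q R"
  shows "ss_equiv n P R"
proof -
  obtain f where f: "weight_preserving f" "\<forall>w\<in>pwords. embeddings n P w = embeddings n Q (f w)"
    using assms(1) unfolding ss_equiv_def by blast
  obtain g where g: "weight_preserving g" "\<forall>w\<in>pwords. embeddings n Q w = embeddings n R (g w)"
    using assms(2) unfolding ss_equiv_def by blast
  have "\<forall>w\<in>pwords. embeddings n P w = embeddings n R ((g \<circ> f) w)"
    using f(2) g(2) weight_preservingD(1)[OF f(1)] by simp
  then show ?thesis unfolding ss_equiv_def using weight_preserving_comp[OF f(1) g(1)] by blast
qed

lemma ss_equiv_cong: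
  assumes "ss_equiv n P Q" "\<And>x. x < n \<Longrightarrow> P x = P' x" "\<And>x. x < n \<Longrightarrow> Q x = Q' x"
  shows "ss_equiv n P' Q'"
proof -
  have "embeddings n P = embeddings n P'" "embeddings n Q = embeddings n Q'"
    using assms(2,3) unfolding embeddings_def by auto
  then show ?thesis using assms(1) unfolding ss_equiv_def by simp
qed

lemma Em_eq_embeddings: "Em u w = Suc ` embeddings (length u) ((!) u) w"
proof (intro set_eqI iffI)
  fix j assume "j \<in> Em u w"
  then have j: "1 \<le> j" "j + length u - 1 \<le> length w"
    "\<forall>k\<in>{1..length u}. u ! (k - 1) \<le> w ! (j + k - 2)"
    unfolding Em_def by auto
  have "\<forall>x<length u. u ! x \<le> w ! (j - 1 + x)"
  proof (intro allI impI)
    fix x assume "x < length u"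
    then show "u ! x \<le> w ! (j - 1 + x)" using j(1) j(3)[rule_format, of "Suc x"] by simp
  qed
  then have "j - 1 \<in> embeddings (length u) ((!) u) w" using j unfolding embeddings_def by simp
  then show "j \<in> Suc ` embeddings (length u) ((!) u) w" using j(1) by (intro image_eqI) auto
next
  fix j assume "j \<in> Suc ` embeddings (length u) ((!) u) w"
  then obtain i where i: "j = Suc i" "i + length u \<le> length w" "\<forall>x<length u. u ! x \<le> w ! (i + x)"
    unfolding embeddings_def by blast
  have "u ! (k - 1) \<le> w ! (j + k - 2)" if "k \<in> {1..length u}" for k
  proof -
    have "k - 1 < length u" "j + k - 2 = i + (k - 1)" using that i(1) by auto
    then show ?thesis using i(3) by simp
  qed
  then show "j \<in> Em u w" unfolding Em_def using i by simp
qed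

lemma ss_wilf_iff_ss_equiv:
  assumes "length u = n" "length v = n"
  shows "ss_wilf u v \<longleftrightarrow> ss_equiv n ((!) u) ((!) v)"
  unfolding ss_wilf_def ss_equiv_def Em_eq_embeddings assms by (simp add: inj_image_eq_iff)

section \<open>Rotating runs of large letters\<close>

definition run_depth :: "nat set \<Rightarrow> nat \<Rightarrow> nat \<Rightarrow> nat" where
  "run_depth H d p = (LEAST k. \<not> (d * (k + 1) \<le> p \<and> p - d * (k + 1) \<in> H))"

definition run_start :: "nat set \<Rightarrow> nat \<Rightarrow> nat \<Rightarrow> nat" where
  "run_start H d p = p - d * run_depth H d p"

text \<open>Every maximal run \<open>p, p + d, \<dots>, p + k * d\<close> inside \<open>H\<close> is rotated cyclically by one
  step; points outside \<open>H\<close> are fixed.\<close>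

definition run_rotation :: "nat set \<Rightarrow> nat \<Rightarrow> nat \<Rightarrow> nat" where
  "run_rotation H d p = (if p \<in> H then if p + d \<in> H then p + d else run_start H d p else p)"

lemma run_depth_below: "k < run_depth H d p \<Longrightarrow> d * (k + 1) \<le> p \<and> p - d * (k + 1) \<in> H"
  unfolding run_depth_def using not_less_Least by blast

lemma run_depth_stop:
  assumes "0 < d"
  shows "\<not> (d * (run_depth H d p + 1) \<le> p \<and> p - d * (run_depth H d p + 1) \<in> H)"
proof -
  have "\<not> (d * (p + 1) \<le> p \<and> p - d * (p + 1) \<in> H)"
    using assms mult_le_mono1[of 1 d "p + 1"] by simp
  then show ?thesis unfolding run_depth_def by (rule LeastI)
qed

lemma run_depth_le: "d * run_depth H d p \<le> p"
  using run_depth_below[of "run_depth H d p - 1" H d p] by (cases "run_depth H d p") auto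

lemma run_start_le: "run_start H d p \<le> p"
  unfolding run_start_def by simp

lemma run_start_add: "run_start H d p + d * run_depth H d p = p"
  unfolding run_start_def using run_depth_le by simp

lemma run_start_chain:
  assumes "p \<in> H" "j \<le> run_depth H d p"
  shows "run_start H d p + d * j \<in> H"
proof (cases "j = run_depth H d p")
  case False
  define k where "k = run_depth H d p - j - 1"
  have "k < run_depth H d p" "k + 1 = run_depth H d p - j" using False assms(2) unfolding k_def by auto
  then have "d * (run_depth H d p - j) \<le> p \<and> p - d * (run_depth H d p - j) \<in> H"
    using run_depth_below[of k H d p] by simp
  moreover have "p - d * (run_depth H d p - j) = run_start H d p + d * j"
    unfolding run_start_def using run_depth_le[of d H p] assms(2) by (simp add: diff_mult_distrib2)
  ultimately show ?thesis by simp
qed (use assms run_start_add in simp)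

lemma run_start_in: "p \<in> H \<Longrightarrow> run_start H d p \<in> H"
  using run_start_chain[of p H 0 d] by simp

lemma run_start_first:
  assumes "0 < d"
  shows "\<not> (d \<le> run_start H d p \<and> run_start H d p - d \<in> H)"
  using run_depth_stop[OF assms, of H p] run_depth_le[of d H p]
  unfolding run_start_def by (simp add: algebra_simps diff_diff_add le_diff_conv2)

lemma run_rotation_in: "p \<in> H \<Longrightarrow> run_rotation H d p \<in> H"
  unfolding run_rotation_def using run_start_in by auto

lemma run_depth_mono_if_same_start:
  assumes "q \<in> H" "q + d \<notin> H" "run_start H d p = run_start H d q" "p \<in> H"
  shows "run_depth H d p \<le> run_depth H d q"
proof (rule ccontr)
  assume "\<not> run_depth H d p \<le> run_depth H d q"
  then have "run_start H d p + d * (run_depth H d q + 1) \<in> H"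
    using run_start_chain[OF assms(4), of "run_depth H d q + 1" d] by simp
  then have "q + d \<in> H" using run_start_add[of H d q] assms(3) by (simp add: algebra_simps)
  then show False using assms(2) by simp
qed

lemma run_rotation_inj:
  assumes d: "0 < d"
  shows "inj_on (run_rotation H d) A"
proof
  fix p q assume "p \<in> A" "q \<in> A" and eq: "run_rotation H d p = run_rotation H d q"
  have start_ne_succ: "q + d \<noteq> run_start H d p" if "q \<in> H" for p q
  proof
    assume "q + d = run_start H d p"
    then have "d \<le> run_start H d p \<and> run_start H d p - d \<in> H"
      using that by (metis add_diff_cancel_right' le_add2)
    then show False using run_start_first[OF d] by blast
  qed
  consider "p \<in> H" "q \<in> H" | "p \<notin> H" "q \<notin> H" | "p \<in> H \<longleftrightarrow> q \<notin> H" by blast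
  then show "p = q"
  proof cases
    case 1
    show ?thesis
    proof (cases "p + d \<in> H"; cases "q + d \<in> H")
      assume "p + d \<notin> H" "q + d \<notin> H"
      then have same: "run_start H d p = run_start H d q"
        using eq 1 unfolding run_rotation_def by simp
      then have "run_depth H d p = run_depth H d q"
        using run_depth_mono_if_same_start 1 \<open>p + d \<notin> H\<close> \<open>q + d \<notin> H\<close> by (metis le_antisym)
      then show ?thesis using same run_start_add by metis
    qed (use eq 1 start_ne_succ not_sym[OF start_ne_succ] in \<open>auto simp: run_rotation_def\<close>)
  next
    case 2
    then show ?thesis using eq unfolding run_rotation_def by simp
  next
    case 3
    then show ?thesis using eq run_rotation_in[of p H d] run_rotation_in[of q H d]
      unfolding run_rotation_def by (auto split: if_splits)
  qed
qed

lemma run_rotation_bij: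
  assumes "0 < d" "H \<subseteq> {..<L}"
  shows "run_rotation H d ` {..<L} = {..<L}"
proof (rule endo_inj_surj)
  show "run_rotation H d ` {..<L} \<subseteq> {..<L}"
  proof
    fix q assume "q \<in> run_rotation H d ` {..<L}"
    then obtain p where "p < L" "q = run_rotation H d p" by blast
    then show "q \<in> {..<L}"
      using assms(2) run_start_le[of H d p] unfolding run_rotation_def by (auto split: if_splits)
  qed
qed (use run_rotation_inj[OF assms(1)] in simp_all)

definition high_positions :: "nat \<Rightarrow> nat list \<Rightarrow> nat set" where
  "high_positions \<theta> w = {p. p < length w \<and> \<theta> \<le> w ! p}"

definition rotate_word :: "nat \<Rightarrow> nat \<Rightarrow> nat list \<Rightarrow> nat list" where
  "rotate_word \<theta> d w = map (\<lambda>p. w ! run_rotation (high_positions \<theta> w) d p) [0..<length w]"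

lemma length_rotate_word [simp]: "length (rotate_word \<theta> d w) = length w"
  unfolding rotate_word_def by simp

lemma nth_rotate_word:
  "p < length w \<Longrightarrow> rotate_word \<theta> d w ! p = w ! run_rotation (high_positions \<theta> w) d p"
  unfolding rotate_word_def by simp

lemma high_positions_subset: "high_positions \<theta> w \<subseteq> {..<length w}"
  unfolding high_positions_def by auto

lemma high_positions_rotate_word: "high_positions \<theta> (rotate_word \<theta> d w) = high_positions \<theta> w"
proof -
  have "\<theta> \<le> w ! run_rotation (high_positions \<theta> w) d p \<longleftrightarrow> p \<in> high_positions \<theta> w"
    if "p < length w" for p
    using that run_rotation_in[of p "high_positions \<theta> w" d]
    unfolding high_positions_def run_rotation_def by auto
  then show ?thesis unfolding high_positions_def[of _ "rotate_word \<theta> d w"]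
    by (auto simp: nth_rotate_word high_positions_def)
qed

lemma rotate_word_weight:
  assumes d: "0 < d" and w: "w \<in> pwords"
  shows "rotate_word \<theta> d w \<in> pwords \<and> wnorm (rotate_word \<theta> d w) = wnorm w"
proof -
  let ?r = "run_rotation (high_positions \<theta> w) d"
  have bij: "?r ` {..<length w} = {..<length w}"
    using run_rotation_bij[OF d high_positions_subset] .
  have "wnorm (rotate_word \<theta> d w) = (\<Sum>p<length w. w ! ?r p)"
    unfolding wnorm_def sum_list_sum_nth by (simp add: atLeast0LessThan nth_rotate_word)
  also have "\<dots> = (\<Sum>q\<in>?r ` {..<length w}. w ! q)"
    using sum.reindex[OF run_rotation_inj[OF d], of "\<lambda>q. w ! q"] by simp
  also have "\<dots> = wnorm w"
    unfolding bij wnorm_def sum_list_sum_nth by (simp add: atLeast0LessThan)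
  finally have "wnorm (rotate_word \<theta> d w) = wnorm w" .
  moreover have "rotate_word \<theta> d w \<in> pwords"
  proof -
    have "0 < w ! ?r p" if "p < length w" for p
      using w bij that unfolding pwords_def by (auto simp: all_set_conv_all_nth)
    then show ?thesis unfolding pwords_def rotate_word_def by auto
  qed
  ultimately show ?thesis by blast
qed

lemma rotate_word_inj:
  assumes d: "0 < d"
  shows "inj_on (rotate_word \<theta> d) pwords"
proof
  fix w v assume "w \<in> pwords" "v \<in> pwords" and eq: "rotate_word \<theta> d w = rotate_word \<theta> d v"
  have l: "length w = length v" using eq by (metis length_rotate_word)
  have H: "high_positions \<theta> w = high_positions \<theta> v" using eq by (metis high_positions_rotate_word)
  have bij: "run_rotation (high_positions \<theta> w) d ` {..<length w} = {..<length w}"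
    using run_rotation_bij[OF d high_positions_subset] .
  show "w = v"
  proof (rule nth_equalityI)
    fix q assume "q < length w"
    then obtain p where p: "p < length w" "q = run_rotation (high_positions \<theta> w) d p"
      using bij by (metis imageE lessThan_iff)
    then show "w ! q = v ! q" using arg_cong[OF eq, of "\<lambda>w. w ! p"] l H by (simp add: nth_rotate_word)
  qed (rule l)
qed

lemma weight_preserving_rotate_word: "0 < d \<Longrightarrow> weight_preserving (rotate_word \<theta> d)"
  by (rule weight_preserving_if_inj) (simp_all add: rotate_word_weight rotate_word_inj)

lemma rotate_word_high:
  "p < length w \<Longrightarrow> \<theta> \<le> rotate_word \<theta> d w ! p \<longleftrightarrow> \<theta> \<le> w ! p"
  using high_positions_rotate_word[of \<theta> d w] unfolding high_positions_def by auto

lemma rotate_word_step: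
  "p + d < length w \<Longrightarrow> \<theta> \<le> w ! p \<Longrightarrow> \<theta> \<le> w ! (p + d) \<Longrightarrow> rotate_word \<theta> d w ! p = w ! (p + d)"
  by (simp add: nth_rotate_word run_rotation_def high_positions_def)

lemma rotate_word_low: "p < length w \<Longrightarrow> \<not> \<theta> \<le> w ! p \<Longrightarrow> rotate_word \<theta> d w ! p = w ! p"
  by (simp add: nth_rotate_word run_rotation_def high_positions_def)

text \<open>Rotating the runs of letters \<open>\<ge> \<theta>\<close> transports embeddings of \<open>P1\<close> to embeddings
  of \<open>P2\<close>.\<close>

locale progression_flip =
  fixes n b d N \<theta> :: nat and P1 P2 :: "nat \<Rightarrow> nat"
  assumes d: "0 < d" and last_lt: "b + N * d < n"
    and outside: "\<And>x. x < n \<Longrightarrow> x \<notin> progression b d (Suc N) \<Longrightarrow> P1 x = P2 x \<and> P1 x < \<theta>"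
    and inside: "\<And>x. x \<in> progression b d (Suc N) \<Longrightarrow> \<theta> \<le> P1 x \<and> \<theta> \<le> P2 x"
    and first: "P1 b \<le> \<theta>" and last: "P2 (b + N * d) \<le> \<theta>"
    and shift: "\<And>q. q \<in> progression b d N \<Longrightarrow> P2 q = P1 (q + d)"
begin

lemma progression_lt:
  assumes "x \<in> progression b d (Suc N)"
  shows "x < n"
proof -
  obtain i where "i < Suc N" "x = b + i * d" using assms unfolding progression_iff by blast
  moreover have "i * d \<le> N * d" using \<open>i < Suc N\<close> by (intro mult_le_mono1) simp
  ultimately show ?thesis using last_lt by linarith
qed

lemma progression_cases_last:
  "x \<in> progression b d (Suc N) \<Longrightarrow> x = b + N * d \<or> x \<in> progression b d N"
  unfolding progression_Suc by blast

lemma progression_cases_first: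
  "x \<in> progression b d (Suc N) \<Longrightarrow> x = b \<or> (\<exists>q\<in>progression b d N. x = q + d)"
  unfolding progression_Suc_shift by blast

lemma progression_succ: "q \<in> progression b d N \<Longrightarrow> q + d \<in> progression b d (Suc N)"
  unfolding progression_Suc_shift by blast

lemma progression_mono: "q \<in> progression b d N \<Longrightarrow> q \<in> progression b d (Suc N)"
  unfolding progression_Suc by blast

lemma embedding_to_rotation:
  assumes "i \<in> embeddings n P1 w"
  shows "i \<in> embeddings n P2 (rotate_word \<theta> d w)"
proof -
  have L: "i + n \<le> length w" and A: "\<And>x. x < n \<Longrightarrow> P1 x \<le> w ! (i + x)"
    using assms unfolding embeddings_def by auto
  have "P2 x \<le> rotate_word \<theta> d w ! (i + x)" if x: "x < n" for x
  proof (cases "x \<in> progression b d (Suc N)")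
    case True
    have high: "\<theta> \<le> w ! (i + x)" using inside[OF True] A[OF x] by simp
    show ?thesis
    proof (cases "x = b + N * d")
      case True
      have "\<theta> \<le> rotate_word \<theta> d w ! (i + x)" using rotate_word_high[of "i + x" w \<theta> d] high L x by simp
      then show ?thesis using last True by simp
    next
      case False
      then have q: "x \<in> progression b d N" using progression_cases_last[OF True] by blast
      have xd: "x + d < n" using progression_lt[OF progression_succ[OF q]] .
      have "\<theta> \<le> w ! (i + x + d)" using inside[OF progression_succ[OF q]] A[OF xd] by (simp add: add.assoc)
      then show ?thesis using rotate_word_step[of "i + x" d w \<theta>] high L xd A[OF xd] shift[OF q]
        by (simp add: add.assoc)
    qed
  next
    case False
    then show ?thesis using outside[OF x False] A[OF x] L x rotate_word_high[of "i + x" w \<theta> d]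
      rotate_word_low[of "i + x" w \<theta> d] by (cases "\<theta> \<le> w ! (i + x)") auto
  qed
  then show ?thesis unfolding embeddings_def using L by simp
qed

lemma embedding_from_rotation:
  assumes "i \<in> embeddings n P2 (rotate_word \<theta> d w)"
  shows "i \<in> embeddings n P1 w"
proof -
  let ?f = "rotate_word \<theta> d w"
  have L: "i + n \<le> length w" and A: "\<And>x. x < n \<Longrightarrow> P2 x \<le> ?f ! (i + x)"
    using assms unfolding embeddings_def by auto
  have high: "\<theta> \<le> w ! (i + x)" if "x \<in> progression b d (Suc N)" for x
    using inside[OF that] A[OF progression_lt[OF that]] rotate_word_high[of "i + x" w \<theta> d]
      L progression_lt[OF that] by simp
  have "P1 x \<le> w ! (i + x)" if x: "x < n" for x
  proof (cases "x \<in> progression b d (Suc N)")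
    case True
    show ?thesis
    proof (cases "x = b")
      case True
      then show ?thesis using high first progression_iff[of b b d "Suc N"] by fastforce
    next
      case False
      then obtain q where q: "q \<in> progression b d N" "x = q + d"
        using progression_cases_first[OF \<open>x \<in> progression b d (Suc N)\<close>] by blast
      have "?f ! (i + q) = w ! (i + x)"
        using rotate_word_step[of "i + q" d w \<theta>] high[OF progression_mono[OF q(1)]] high[OF True] q(2) L x
        by (simp add: add.assoc)
      then show ?thesis using A[OF progression_lt[OF progression_mono[OF q(1)]]] shift[OF q(1)] q(2) by simp
    qed
  next
    case False
    then show ?thesis using outside[OF x False] A[OF x] L x rotate_word_low[of "i + x" w \<theta> d]
      by (cases "\<theta> \<le> w ! (i + x)") auto
  qed
  then show ?thesis unfolding embeddings_def using L by simp
qed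

lemma ss_equiv_flip: "ss_equiv n P1 P2"
  unfolding ss_equiv_def
  using embedding_to_rotation embedding_from_rotation weight_preserving_rotate_word[OF d] by blast

end

section \<open>Sufficiency\<close>

fun place_letters :: "nat list \<Rightarrow> nat \<Rightarrow> (nat \<Rightarrow> nat) \<Rightarrow> nat \<Rightarrow> nat" where
  "place_letters [] b B = B"
| "place_letters (x # s) b B = place_letters s (Suc b) (B(x := Suc b))"

lemma place_letters_outside: "z \<notin> set s \<Longrightarrow> place_letters s b B z = B z"
  by (induction s arbitrary: b B) auto

lemma place_letters_nth:
  "distinct s \<Longrightarrow> i < length s \<Longrightarrow> place_letters s b B (s ! i) = b + Suc i"
proof (induction s arbitrary: b B i)
  case (Cons x s)
  then show ?case using place_letters_outside[of x s] by (cases i) auto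
qed simp

lemma place_letters_ge: "distinct s \<Longrightarrow> z \<in> set s \<Longrightarrow> Suc b \<le> place_letters s b B z"
  by (auto simp: in_set_conv_nth place_letters_nth)

lemma place_letters_positions:
  assumes u: "u \<in> perms n" and x: "x < n"
  shows "place_letters (positions u) 0 B x = u ! x"
proof -
  have "u ! x - 1 < n" "Suc (u ! x - 1) = u ! x" using nth_perm_bounds[OF u x] by auto
  then have "positions u ! (u ! x - 1) = x"
    using nth_positions[of "u ! x - 1" u] position_nth[OF u x] length_perm[OF u] by simp
  moreover have "distinct (positions u)" "length (positions u) = n"
    using positions_in_permutations[OF u] length_positions[of u] length_perm[OF u]
    by (auto dest: permutations_of_setD)
  ultimately show ?thesis
    using place_letters_nth[of "positions u" "u ! x - 1" 0 B] \<open>u ! x - 1 < n\<close> \<open>Suc _ = u ! x\<close> by simp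
qed

definition suffix_translates :: "nat list \<Rightarrow> nat list \<Rightarrow> bool" where
  "suffix_translates s t \<longleftrightarrow> length s = length t \<and> (\<forall>j. translates (set (drop j s)) (set (drop j t)))"

lemma suffix_translates_Cons:
  "suffix_translates (x # s) (y # t) \<longleftrightarrow> translates (set (x # s)) (set (y # t)) \<and> suffix_translates s t"
proof -
  have "(\<forall>j. translates (set (drop j (x # s))) (set (drop j (y # t)))) \<longleftrightarrow>
    translates (set (x # s)) (set (y # t)) \<and> (\<forall>j. translates (set (drop j s)) (set (drop j t)))"
    by (metis drop0 drop_Suc_Cons not0_implies_Suc)
  then show ?thesis unfolding suffix_translates_def length_Cons Suc_inject by blast
qed

lemma suffix_translates_sym: "suffix_translates s t \<Longrightarrow> suffix_translates t s"
  unfolding suffix_translates_def using translates_sym by metis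

lemma suffix_translates_trans:
  "suffix_translates s t \<Longrightarrow> suffix_translates t r \<Longrightarrow> suffix_translates s r"
  unfolding suffix_translates_def using translates_trans by metis

lemma suffix_translates_map_diff:
  "\<forall>z\<in>set s. d \<le> z \<Longrightarrow> suffix_translates (map (\<lambda>z. z - d) s) s"
  unfolding suffix_translates_def
  by (auto simp: drop_map intro!: translates_image_diff dest: in_set_dropD)

lemma progression_list_shift_down:
  assumes d: "0 < d" and X: "set (m # s) = progression m d (Suc N)" "distinct (m # s)"
  shows "set s = (\<lambda>q. q + d) ` progression m d N"
    and "set (map (\<lambda>z. z - d) s) = progression m d N"
    and "distinct ((m + N * d) # map (\<lambda>z. z - d) s)"
proof -
  have "m \<notin> (\<lambda>q. q + d) ` progression m d N" using d by (auto simp: progression_iff)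
  then show set_s: "set s = (\<lambda>q. q + d) ` progression m d N"
    using X unfolding progression_Suc_shift by (metis Diff_insert_absorb distinct.simps(2) list.simps(15))
  then show set_r: "set (map (\<lambda>z. z - d) s) = progression m d N" by (simp add: image_image)
  have "inj_on (\<lambda>z. z - d) (set s)" using set_s by (auto simp: inj_on_def)
  then show "distinct ((m + N * d) # map (\<lambda>z. z - d) s)"
    using X(2) set_r progression_remove_last[OF d, of m N] by (auto simp: distinct_map)
qed

lemma ss_equiv_place_letters_flip:
  assumes d: "0 < d" "1 \<le> N" and X: "set (m # s) = progression m d (Suc N)" "set (m # s) \<subseteq> {..<n}"
    and s: "distinct (m # s)" and B: "\<forall>z<n. z \<notin> set (m # s) \<longrightarrow> B z \<le> b"
  shows "ss_equiv n (place_letters (m # s) b B) (place_letters ((m + N * d) # map (\<lambda>z. z - d) s) b B)"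
proof -
  define r where "r = map (\<lambda>z. z - d) s"
  note shifted = progression_list_shift_down[OF d(1) X(1) s, folded r_def]
  note set_s = shifted(1) and set_r = shifted(2) and r = shifted(3)
  have set_Mr: "set ((m + N * d) # r) = progression m d (Suc N)"
    using set_r by (simp add: progression_Suc)
  show ?thesis unfolding r_def[symmetric]
  proof (rule progression_flip.ss_equiv_flip, unfold_locales)
    show "m + N * d < n" using X progression_Suc[of m d N] by auto
    show "place_letters (m # s) b B x = place_letters ((m + N * d) # r) b B x \<and>
        place_letters (m # s) b B x < Suc b" if "x < n" "x \<notin> progression m d (Suc N)" for x
      using that B X(1) set_Mr place_letters_outside by (metis le_imp_less_Suc)
    show "Suc b \<le> place_letters (m # s) b B x \<and> Suc b \<le> place_letters ((m + N * d) # r) b B x"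
      if "x \<in> progression m d (Suc N)" for x
    proof -
      have "x \<in> set (m # s)" "x \<in> set ((m + N * d) # r)" using that X(1) set_Mr by auto
      then show ?thesis using place_letters_ge[OF s] place_letters_ge[OF r] by blast
    qed
    show "place_letters (m # s) b B m \<le> Suc b" "place_letters ((m + N * d) # r) b B (m + N * d) \<le> Suc b"
      using place_letters_nth[OF s, of 0 b B] place_letters_nth[OF r, of 0 b B]
      by (simp_all del: place_letters.simps)
    show "place_letters ((m + N * d) # r) b B q = place_letters (m # s) b B (q + d)"
      if "q \<in> progression m d N" for q
    proof -
      have "q \<in> set r" using that set_r by simp
      then obtain i where i: "i < length s" "r ! i = q" unfolding r_def by (auto simp: in_set_conv_nth)
      obtain q' where "s ! i = q' + d" using set_s nth_mem[OF i(1)] by auto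
      then have si: "s ! i = q + d" using i unfolding r_def by simp
      have "place_letters ((m + N * d) # r) b B (((m + N * d) # r) ! Suc i) = b + Suc (Suc i)"
        using place_letters_nth[OF r, of "Suc i" b B] i unfolding r_def by (simp del: place_letters.simps)
      moreover have "place_letters (m # s) b B ((m # s) ! Suc i) = b + Suc (Suc i)"
        using place_letters_nth[OF s, of "Suc i" b B] i by (simp del: place_letters.simps)
      ultimately show ?thesis using i(2) si by simp
    qed
  qed (use d in simp)
qed

lemma ss_equiv_place_letters_step:
  assumes IH: "\<And>s t b B. k = length s \<Longrightarrow> distinct s \<Longrightarrow> distinct t \<Longrightarrow> set s = set t \<Longrightarrow>
      set s \<subseteq> {..<n} \<Longrightarrow> suffix_translates s t \<Longrightarrow> \<forall>z<n. z \<notin> set s \<longrightarrow> B z \<le> b \<Longrightarrow>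
      ss_equiv n (place_letters s b B) (place_letters t b B)"
    and k: "length s' = k" and d: "0 < d" "1 \<le> N"
    and X: "set (m # s') = progression m d (Suc N)" "set (m # s') \<subseteq> {..<n}"
    and dist: "distinct (m # s')" "distinct ((m + N * d) # t')"
    and same: "set (m # s') = set ((m + N * d) # t')"
    and st: "suffix_translates s' t'" and B: "\<forall>z<n. z \<notin> set (m # s') \<longrightarrow> B z \<le> b"
  shows "ss_equiv n (place_letters (m # s') b B) (place_letters ((m + N * d) # t') b B)"
proof -
  define r where "r = map (\<lambda>z. z - d) s'"
  have flip: "ss_equiv n (place_letters (m # s') b B) (place_letters ((m + N * d) # r) b B)"
    unfolding r_def by (rule ss_equiv_place_letters_flip[OF d X dist(1) B])
  have r: "distinct ((m + N * d) # r)" "set ((m + N * d) # r) = set (m # s')"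
    using progression_list_shift_down[OF d(1) X(1) dist(1)] X(1)
    unfolding r_def by (auto simp: progression_Suc)
  have "\<forall>z\<in>set s'. d \<le> z"
    using progression_list_shift_down(1)[OF d(1) X(1) dist(1)] by auto
  then have rt: "suffix_translates r t'"
    unfolding r_def using suffix_translates_map_diff st suffix_translates_trans by blast
  have "set r = set t'"
    using r dist(2) same by (metis Diff_insert_absorb distinct.simps(2) list.simps(15))
  moreover have "set r \<subseteq> {..<n}" using r(2) X(2) by auto
  moreover have "\<forall>z<n. z \<notin> set r \<longrightarrow> (B(m + N * d := Suc b)) z \<le> Suc b"
    using B r(2) by (auto intro: le_SucI)
  moreover have "k = length r" unfolding r_def using k by simp
  ultimately have "ss_equiv n (place_letters r (Suc b) (B(m + N * d := Suc b)))
      (place_letters t' (Suc b) (B(m + N * d := Suc b)))"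
    using IH r(1) dist(2) rt by simp
  then show ?thesis using flip ss_equiv_trans by simp
qed

lemma ss_equiv_place_letters:
  assumes "distinct s" "distinct t" "set s = set t" "set s \<subseteq> {..<n}" "suffix_translates s t"
    "\<forall>z<n. z \<notin> set s \<longrightarrow> B z \<le> b"
  shows "ss_equiv n (place_letters s b B) (place_letters t b B)"
  using assms
proof (induction "length s" arbitrary: s t b B)
  case 0
  then show ?case using ss_equiv_refl by (simp add: suffix_translates_def)
next
  case (Suc k)
  obtain x s' y t' where s: "s = x # s'" and t: "t = y # t'"
    using Suc.hyps(2) Suc.prems(5) unfolding suffix_translates_def by (metis length_Suc_conv)
  have st': "suffix_translates s' t'" using Suc.prems(5) s t suffix_translates_Cons by blast
  then have k: "length s' = k" "length t' = k"
    using Suc.hyps(2) s unfolding suffix_translates_def by auto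
  define X where "X = set s"
  show ?case
  proof (cases "x = y")
    case True
    have "set s' = set t'" using Suc.prems(1-3) s t True by auto
    moreover have "\<forall>z<n. z \<notin> set s' \<longrightarrow> (B(x := Suc b)) z \<le> Suc b"
      using Suc.prems(6) s by (auto intro: le_SucI)
    ultimately show ?thesis using Suc.hyps(1)[OF k(1)[symmetric] _ _ _ _ st'] Suc.prems(1,2,4) s t True by simp
  next
    case False
    have "translates (X - {x}) (X - {y})"
      using st' Suc.prems(1-3) s t unfolding X_def suffix_translates_def
      by (metis Diff_insert_absorb distinct.simps(2) drop0 list.simps(15))
    moreover have "finite X" "x \<in> X" "y \<in> X" using Suc.prems(3) s t unfolding X_def by auto
    ultimately obtain a d N where d: "0 < d" "1 \<le> N" and X: "X = progression a d (Suc N)"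
      and xy: "x = a \<and> y = a + N * d \<or> x = a + N * d \<and> y = a"
      using translated_removals_ends False by metis
    note Xn = Suc.prems(4)[folded X_def, unfolded X]
    from xy show ?thesis
    proof
      assume xy: "x = a \<and> y = a + N * d"
      have "ss_equiv n (place_letters (a # s') b B) (place_letters ((a + N * d) # t') b B)"
        by (rule ss_equiv_place_letters_step[OF Suc.hyps(1) k(1) d])
          (use Suc.prems X Xn st' s t xy in \<open>auto simp: X_def\<close>)
      then show ?thesis using s t xy by simp
    next
      assume xy: "x = a + N * d \<and> y = a"
      have "ss_equiv n (place_letters (a # t') b B) (place_letters ((a + N * d) # s') b B)"
        by (rule ss_equiv_place_letters_step[OF Suc.hyps(1) k(2) d])
          (use Suc.prems X Xn suffix_translates_sym[OF st'] s t xy in \<open>auto simp: X_def\<close>)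
      then show ?thesis using s t xy ss_equiv_sym by simp
    qed
  qed
qed

section \<open>Necessity\<close>

text \<open>The pointwise least word of length \<open>L\<close> in which every \<open>e \<in> E\<close> is an embedding index.\<close>

definition least_letter :: "nat \<Rightarrow> (nat \<Rightarrow> nat) \<Rightarrow> nat set \<Rightarrow> nat \<Rightarrow> nat" where
  "least_letter n P E p = Max (insert 1 ((\<lambda>e. P (p - e)) ` {e \<in> E. e \<le> p \<and> p < e + n}))"

definition least_word :: "nat \<Rightarrow> (nat \<Rightarrow> nat) \<Rightarrow> nat set \<Rightarrow> nat \<Rightarrow> nat list" where
  "least_word n P E L = map (least_letter n P E) [0..<L]"

lemma least_word_embeddings:
  assumes E: "finite E" "\<forall>e\<in>E. e + n \<le> L"
  shows "least_word n P E L \<in> pwords" "length (least_word n P E L) = L"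
    and "E \<subseteq> embeddings n P (least_word n P E L)"
proof -
  have fin: "finite (insert 1 ((\<lambda>e. P (p - e)) ` {e \<in> E. e \<le> p \<and> p < e + n}))" for p
    using E(1) by simp
  show "least_word n P E L \<in> pwords" "length (least_word n P E L) = L"
    unfolding least_word_def least_letter_def pwords_def using fin by (auto simp: Max_gr_iff)
  show "E \<subseteq> embeddings n P (least_word n P E L)"
  proof
    fix e assume e: "e \<in> E"
    have "P x \<le> least_letter n P E (e + x)" if "x < n" for x
      unfolding least_letter_def using e that fin by (intro Max_ge) force+
    then show "e \<in> embeddings n P (least_word n P E L)"
      using E(2) e unfolding embeddings_def least_word_def by force
  qed
qed

lemma least_word_minimal:
  assumes E: "finite E" and w: "w \<in> pwords" "length w = L" "E \<subseteq> embeddings n P w"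
  shows "wnorm (least_word n P E L) \<le> wnorm w"
proof -
  have "least_letter n P E p \<le> w ! p" if p: "p < L" for p
  proof -
    have "1 \<le> w ! p" using w p unfolding pwords_def by (simp add: Suc_le_eq)
    moreover have "P (p - e) \<le> w ! p" if "e \<in> E" "e \<le> p" "p < e + n" for e
    proof -
      have "\<forall>x<n. P x \<le> w ! (e + x)" using w(3) that(1) unfolding embeddings_def by blast
      then have "p - e < n \<longrightarrow> P (p - e) \<le> w ! (e + (p - e))" by blast
      then show ?thesis using that(2,3) by simp
    qed
    ultimately show ?thesis unfolding least_letter_def using E by auto
  qed
  then show ?thesis
    unfolding wnorm_def least_word_def sum_list_sum_nth using w(2)
    by (simp add: atLeast0LessThan) (rule sum_mono, simp)
qed

lemma ss_equiv_least_word_norm: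
  assumes ss: "ss_equiv n P Q" and E: "finite E" "\<forall>e\<in>E. e + n \<le> L"
  shows "wnorm (least_word n P E L) = wnorm (least_word n Q E L)"
proof -
  have le: "wnorm (least_word n Q E L) \<le> wnorm (least_word n P E L)" if PQ: "ss_equiv n P Q" for P Q
  proof -
    obtain f where f: "weight_preserving f" "\<forall>w\<in>pwords. embeddings n P w = embeddings n Q (f w)"
      using PQ unfolding ss_equiv_def by blast
    define w where "w = least_word n P E L"
    note w = least_word_embeddings[OF E, of P, folded w_def]
    note fw = weight_preservingD[OF f(1) w(1)]
    have "E \<subseteq> embeddings n Q (f w)" using w(1,3) f(2) by simp
    then have "wnorm (least_word n Q E L) \<le> wnorm (f w)"
      using least_word_minimal[OF E(1) fw(1)] fw(2) w(2) by simp
    then show ?thesis using fw(3) unfolding w_def by simp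
  qed
  show ?thesis using le[OF ss] le[OF ss_equiv_sym[OF ss]] by simp
qed

lemma Max_insert_one_eq_count:
  assumes A: "finite A" "A \<subseteq> {1..n}"
  shows "Max (insert 1 A) = 1 + card {m \<in> {2..n}. \<exists>a\<in>A. m \<le> a}"
proof -
  define M where "M = Max (insert 1 A)"
  have M: "1 \<le> M" "M \<in> insert 1 A" "\<forall>a\<in>A. a \<le> M"
    unfolding M_def using A(1) Max_in[of "insert 1 A"] by auto
  have "{m \<in> {2..n}. \<exists>a\<in>A. m \<le> a} = {2..M}"
  proof (intro equalityI subsetI)
    fix m assume "m \<in> {2..M}"
    then have "M \<in> A" using M(2) by auto
    then show "m \<in> {m \<in> {2..n}. \<exists>a\<in>A. m \<le> a}" using \<open>m \<in> {2..M}\<close> A(2) by auto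
  qed (use M(3) in auto)
  then show ?thesis using M(1) unfolding M_def by simp
qed

definition upper_cover :: "nat list \<Rightarrow> nat set \<Rightarrow> nat \<Rightarrow> nat set" where
  "upper_cover u E m = (\<Union>e\<in>E. (\<lambda>z. z + e) ` upper_set u m)"

lemma least_letter_perm:
  assumes u: "u \<in> perms n" and E: "finite E"
  shows "least_letter n ((!) u) E p = 1 + card {m \<in> {2..n}. p \<in> upper_cover u E m}"
proof -
  define A where "A = (\<lambda>e. u ! (p - e)) ` {e \<in> E. e \<le> p \<and> p < e + n}"
  have sub: "A \<subseteq> {1..n}" unfolding A_def using nth_perm_bounds[OF u] by fastforce
  have iff: "(\<exists>a\<in>A. m \<le> a) \<longleftrightarrow> p \<in> upper_cover u E m" for m
  proof
    assume "\<exists>a\<in>A. m \<le> a"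
    then obtain e where "e \<in> E" "e \<le> p" "p - e \<in> upper_set u m"
      unfolding A_def upper_set_def using length_perm[OF u] by auto
    then show "p \<in> upper_cover u E m" unfolding upper_cover_def by force
  next
    assume "p \<in> upper_cover u E m"
    then obtain e z where "e \<in> E" "z \<in> upper_set u m" "p = z + e" unfolding upper_cover_def by blast
    then show "\<exists>a\<in>A. m \<le> a"
      unfolding A_def upper_set_def using length_perm[OF u] by (auto intro!: bexI[of _ "u ! z"])
  qed
  have "least_letter n ((!) u) E p = Max (insert 1 A)" unfolding least_letter_def A_def ..
  also have "\<dots> = 1 + card {m \<in> {2..n}. \<exists>a\<in>A. m \<le> a}"
    by (rule Max_insert_one_eq_count[OF _ sub]) (use E in \<open>simp add: A_def\<close>)
  finally show ?thesis using iff by simp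
qed

lemma upper_cover_subset: "u \<in> perms n \<Longrightarrow> \<forall>e\<in>E. e + n \<le> L \<Longrightarrow> upper_cover u E m \<subseteq> {..<L}"
  unfolding upper_cover_def upper_set_def using length_perm by fastforce

lemma wnorm_least_word_perm:
  assumes u: "u \<in> perms n" and E: "finite E" "\<forall>e\<in>E. e + n \<le> L"
  shows "wnorm (least_word n ((!) u) E L) = L + (\<Sum>m\<in>{2..n}. card (upper_cover u E m))"
proof -
  have "wnorm (least_word n ((!) u) E L) = (\<Sum>p<L. 1 + card {m \<in> {2..n}. p \<in> upper_cover u E m})"
    unfolding wnorm_def least_word_def sum_list_sum_nth
    by (simp add: atLeast0LessThan least_letter_perm[OF u E(1)])
  also have "\<dots> = L + (\<Sum>p<L. \<Sum>m\<in>{2..n}. of_bool (p \<in> upper_cover u E m))"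
    by (subst sum.distrib) (simp add: Int_def)
  also have "\<dots> = L + (\<Sum>m\<in>{2..n}. card ({..<L} \<inter> upper_cover u E m))"
    by (subst sum.swap) (simp add: Int_def)
  also have "\<dots> = L + (\<Sum>m\<in>{2..n}. card (upper_cover u E m))"
    using upper_cover_subset[OF u E(2)] by (simp add: Int_absorb1)
  finally show ?thesis .
qed

lemma int_card_UN_indexed:
  assumes "finite A" "\<And>a. a \<in> A \<Longrightarrow> finite (X a)"
  shows "int (card (\<Union>(X ` A))) =
    (\<Sum>B | B \<subseteq> A \<and> B \<noteq> {}. (- 1) ^ (card B + 1) * int (card (\<Inter>(X ` B))))"
proof -
  interpret Incl_Excl finite "int \<circ> card"
    by unfold_locales (auto simp: card_Un_disjnt)
  show ?thesis using restricted_indexed[of A X] assms by auto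
qed

definition overlap_count :: "nat \<Rightarrow> nat list \<Rightarrow> nat set \<Rightarrow> int" where
  "overlap_count n u T = (\<Sum>m\<in>{2..n}. int (card (\<Inter>e\<in>T. (\<lambda>z. z + e) ` upper_set u m)))"

lemma sum_card_upper_cover:
  assumes "finite E"
  shows "int (\<Sum>m\<in>{2..n}. card (upper_cover u E m)) =
    (\<Sum>T | T \<subseteq> E \<and> T \<noteq> {}. (- 1) ^ (card T + 1) * overlap_count n u T)"
proof -
  have "int (card (upper_cover u E m)) = (\<Sum>T | T \<subseteq> E \<and> T \<noteq> {}.
      (- 1) ^ (card T + 1) * int (card (\<Inter>e\<in>T. (\<lambda>z. z + e) ` upper_set u m)))" for m
    unfolding upper_cover_def by (rule int_card_UN_indexed[OF assms]) (simp add: upper_set_def)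
  then show ?thesis
    unfolding overlap_count_def of_nat_sum by (simp add: sum_distrib_left sum.swap[of _ "{2..n}"])
qed

lemma alternating_subset_sums_eq_imp_eq:
  fixes g h :: "nat set \<Rightarrow> int"
  assumes sums: "\<And>E. finite E \<Longrightarrow> (\<Sum>T | T \<subseteq> E \<and> T \<noteq> {}. (- 1) ^ (card T + 1) * g T) =
                                 (\<Sum>T | T \<subseteq> E \<and> T \<noteq> {}. (- 1) ^ (card T + 1) * h T)"
  shows "finite E \<Longrightarrow> E \<noteq> {} \<Longrightarrow> g E = h E"
proof (induction "card E" arbitrary: E rule: less_induct)
  case less
  define A where "A = {T. T \<subseteq> E \<and> T \<noteq> {}}"
  have A: "finite A" "E \<in> A" unfolding A_def using less.prems by auto
  have "g T = h T" if "T \<in> A - {E}" for T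
    using that less.hyps less.prems(1) unfolding A_def
    by (metis (mono_tags, lifting) DiffE finite_subset mem_Collect_eq psubsetI psubset_card_mono singletonI)
  then have "(\<Sum>T\<in>A - {E}. (- 1) ^ (card T + 1) * g T) = (\<Sum>T\<in>A - {E}. (- 1) ^ (card T + 1) * h T)"
    by simp
  moreover have "(\<Sum>T\<in>A. (- 1) ^ (card T + 1) * g T) = (\<Sum>T\<in>A. (- 1) ^ (card T + 1) * h T)"
    using sums[OF less.prems(1)] unfolding A_def by simp
  ultimately have "(- 1) ^ (card E + 1) * g E = (- 1) ^ (card E + 1) * h E"
    using sum.remove[OF A] by (metis (no_types, lifting) add_right_cancel)
  then show ?case by simp
qed

lemma overlap_count_eq:
  assumes u: "u \<in> perms n" and v: "v \<in> perms n" and ss: "ss_equiv n ((!) u) ((!) v)"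
    and T: "finite T" "T \<noteq> {}"
  shows "overlap_count n u T = overlap_count n v T"
proof (rule alternating_subset_sums_eq_imp_eq[OF _ T])
  fix E :: "nat set" assume E: "finite E"
  define L where "L = Max (insert 0 E) + n"
  have EL: "\<forall>e\<in>E. e + n \<le> L" unfolding L_def using E by simp
  show "(\<Sum>T | T \<subseteq> E \<and> T \<noteq> {}. (- 1) ^ (card T + 1) * overlap_count n u T) =
        (\<Sum>T | T \<subseteq> E \<and> T \<noteq> {}. (- 1) ^ (card T + 1) * overlap_count n v T)"
    using ss_equiv_least_word_norm[OF ss E EL] wnorm_least_word_perm[OF u E EL]
      wnorm_least_word_perm[OF v E EL] sum_card_upper_cover[OF E] by (metis add_left_cancel)
qed

text \<open>For finite nonempty \<open>P\<close>, \<open>y \<in> copy_anchors P X\<close> iff \<open>X\<close> contains the translate of \<open>P\<close>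
  whose maximum is \<open>y\<close>.\<close>

definition copy_anchors :: "nat set \<Rightarrow> nat set \<Rightarrow> nat set" where
  "copy_anchors P X = (\<Inter>x\<in>P. (\<lambda>z. z + (Max P - x)) ` X)"

lemma copy_anchorsD:
  assumes "finite P" "y \<in> copy_anchors P X" "x \<in> P"
  shows "Max P \<le> y + x" "y + x - Max P \<in> X"
proof -
  obtain z where "z \<in> X" "y = z + (Max P - x)" using assms(2,3) unfolding copy_anchors_def by blast
  moreover have "x \<le> Max P" using assms(1,3) by simp
  ultimately show "Max P \<le> y + x" "y + x - Max P \<in> X" by simp_all
qed

lemma copy_anchors_copy:
  assumes "finite P" "y \<in> copy_anchors P X"
  shows "inj_on (\<lambda>x. y + x - Max P) P" "(\<lambda>x. y + x - Max P) ` P \<subseteq> X"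
proof -
  show "inj_on (\<lambda>x. y + x - Max P) P"
  proof
    fix a c assume "a \<in> P" "c \<in> P" "y + a - Max P = y + c - Max P"
    then show "a = c" using copy_anchorsD(1)[OF assms, of a] copy_anchorsD(1)[OF assms, of c] by arith
  qed
  show "(\<lambda>x. y + x - Max P) ` P \<subseteq> X" using copy_anchorsD(2)[OF assms] by auto
qed

lemma copy_anchors_empty:
  assumes "finite P" "finite X" "card X < card P"
  shows "copy_anchors P X = {}"
proof (rule ccontr)
  assume "copy_anchors P X \<noteq> {}"
  then obtain y where y: "y \<in> copy_anchors P X" by blast
  have "card P \<le> card X"
    using card_mono[OF assms(2) copy_anchors_copy(2)[OF assms(1) y]]
      card_image[OF copy_anchors_copy(1)[OF assms(1) y]] by simp
  then show False using assms(3) by simp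
qed

lemma translates_if_copy_anchors:
  assumes P: "finite P" and Y: "finite Y" "card Y = card P" and y: "y \<in> copy_anchors P Y"
  shows "translates P Y"
proof -
  have "card ((\<lambda>x. y + x - Max P) ` P) = card Y"
    using card_image[OF copy_anchors_copy(1)[OF P y]] Y(2) by simp
  then have img: "(\<lambda>x. y + x - Max P) ` P = Y"
    using card_subset_eq[OF Y(1) copy_anchors_copy(2)[OF P y]] by simp
  have "(\<lambda>z. z + Max P) ` Y = (\<lambda>x. x + y) ` P"
    unfolding img[symmetric] image_image using copy_anchorsD(1)[OF P y] by (auto intro!: image_cong)
  then show ?thesis unfolding translates_def by metis
qed

lemma Max_in_copy_anchors:
  assumes "finite P" "P \<noteq> {}"
  shows "Max P \<in> copy_anchors P P"
  unfolding copy_anchors_def using assms by (auto intro!: image_eqI)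

lemma finite_copy_anchors: "finite X \<Longrightarrow> P \<noteq> {} \<Longrightarrow> finite (copy_anchors P X)"
  unfolding copy_anchors_def by (auto intro: finite_INT)

lemma translates_if_card_copy_anchors:
  assumes P: "finite P" "P \<noteq> {}" and Y: "finite Y" "card Y = card P"
    and anchors: "card (copy_anchors P Y) = card (copy_anchors P P)"
  shows "translates P Y"
proof -
  have "card (copy_anchors P P) \<noteq> 0"
    using Max_in_copy_anchors[OF P] finite_copy_anchors[OF P(1,2)] by auto
  then obtain y where "y \<in> copy_anchors P Y" using anchors by fastforce
  then show ?thesis using translates_if_copy_anchors[OF P(1) Y] by blast
qed

lemma card_copy_anchors_translates:
  assumes "P \<noteq> {}" "translates X Y"
  shows "card (copy_anchors P X) = card (copy_anchors P Y)"
proof -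
  obtain a b where ab: "(\<lambda>x. x + a) ` X = (\<lambda>x. x + b) ` Y"
    using assms(2) unfolding translates_def by blast
  obtain j where j: "j \<in> P" using assms(1) by blast
  have shift: "(\<lambda>z. z + c) ` copy_anchors P Z = copy_anchors P ((\<lambda>z. z + c) ` Z)" for c Z
    unfolding copy_anchors_def image_INT[OF inj_on_add'[of c UNIV] _ j, simplified]
    by (simp add: image_image algebra_simps)
  have "card (copy_anchors P X) = card ((\<lambda>z. z + a) ` copy_anchors P X)" by (simp add: card_image)
  also have "\<dots> = card ((\<lambda>z. z + b) ` copy_anchors P Y)" unfolding shift ab ..
  also have "\<dots> = card (copy_anchors P Y)" by (simp add: card_image)
  finally show ?thesis .
qed

lemma overlap_count_copy_anchors:
  "overlap_count n u ((\<lambda>x. Max P - x) ` P) = (\<Sum>m\<in>{2..n}. int (card (copy_anchors P (upper_set u m))))"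
  unfolding overlap_count_def copy_anchors_def by (simp add: image_image)

text \<open>Induction on \<open>k\<close>: the overlap count of the translates of \<open>P = upper_set u k\<close> differs
  between \<open>u\<close> and \<open>v\<close> only in the summand \<open>k\<close>, because smaller upper sets are translates by
  induction and larger ones are too small to contain a copy of \<open>P\<close>.\<close>

lemma upper_sets_translate:
  assumes u: "u \<in> perms n" and v: "v \<in> perms n"
    and overlap: "\<And>T. finite T \<Longrightarrow> T \<noteq> {} \<Longrightarrow> overlap_count n u T = overlap_count n v T"
  shows "1 \<le> k \<Longrightarrow> k \<le> n \<Longrightarrow> translates (upper_set u k) (upper_set v k)"
proof (induction k rule: less_induct)
  case (less k)
  show ?case
  proof (cases "k = 1")
    case True
    then show ?thesis using upper_set_one[OF u] upper_set_one[OF v] translates_refl by simp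
  next
    case False
    define P where "P = upper_set u k"
    define D where
      "D m = int (card (copy_anchors P (upper_set u m))) - int (card (copy_anchors P (upper_set v m)))"
      for m
    have fin: "finite (upper_set w m)" for w m unfolding upper_set_def by simp
    have "card P = n + 1 - k" using card_upper_set[OF u] less.prems unfolding P_def by simp
    then have P: "finite P" "card P = n + 1 - k" "P \<noteq> {}"
      using less.prems fin unfolding P_def by auto
    have "(\<Sum>m\<in>{2..n}. D m) = 0"
      using overlap[of "(\<lambda>x. Max P - x) ` P"] P unfolding D_def overlap_count_copy_anchors
      by (simp add: sum_subtractf)
    moreover have "D m = 0" if m: "m \<in> {2..n} - {k}" for m
    proof (cases "m < k")
      case True
      then show ?thesis
        using less.IH[of m] m card_copy_anchors_translates[OF P(3)] unfolding D_def by simp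
    next
      case False
      then have "card (upper_set w m) < card P" if "w \<in> perms n" for w
        using card_upper_set[OF that, of m] m P(2) by auto
      then show ?thesis using copy_anchors_empty[OF P(1) fin] u v unfolding D_def by simp
    qed
    moreover have "k \<in> {2..n}" using False less.prems by simp
    ultimately have "D k = 0" by (simp add: sum.remove)
    then show ?thesis
      using translates_if_card_copy_anchors[OF P(1,3) fin] card_upper_set[OF v] less.prems P(2)
      unfolding D_def P_def by simp
  qed
qed

lemma suffix_translates_if_ss_equiv:
  assumes u: "u \<in> perms n" and v: "v \<in> perms n" and ss: "ss_equiv n ((!) u) ((!) v)"
  shows "suffix_translates (positions u) (positions v)"
proof -
  have "translates (set (drop j (positions u))) (set (drop j (positions v)))" for j
  proof (cases "j < n")
    case True
    then show ?thesis
      using upper_sets_translate[OF u v overlap_count_eq[OF u v ss], of "Suc j"]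
      by (simp add: set_drop_positions[OF u] set_drop_positions[OF v])
  next
    case False
    then show ?thesis
      using translates_refl length_positions length_perm[OF u] length_perm[OF v] by simp
  qed
  then show ?thesis
    unfolding suffix_translates_def using length_positions length_perm[OF u] length_perm[OF v] by simp
qed

section \<open>Counting the class\<close>

lemma ss_wilf_iff_suffix_translates:
  assumes u: "u \<in> perms n" and v: "v \<in> perms n"
  shows "ss_wilf u v \<longleftrightarrow> suffix_translates (positions u) (positions v)"
proof -
  have "ss_equiv n ((!) u) ((!) v)" if "suffix_translates (positions u) (positions v)"
  proof -
    have "ss_equiv n (place_letters (positions u) 0 (\<lambda>_. 0)) (place_letters (positions v) 0 (\<lambda>_. 0))"
      using that positions_in_permutations[OF u] positions_in_permutations[OF v]
      by (intro ss_equiv_place_letters) (auto dest: permutations_of_setD)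
    then show ?thesis
      by (rule ss_equiv_cong) (simp_all add: place_letters_positions[OF u] place_letters_positions[OF v])
  qed
  then show ?thesis
    using ss_wilf_iff_ss_equiv[OF length_perm[OF u] length_perm[OF v]] suffix_translates_if_ss_equiv[OF u v]
    by blast
qed

lemma card_translated_removals:
  assumes tr: "translates X Y"
  shows "card {y \<in> Y. translates A (Y - {y})} = card {z \<in> X. translates A (X - {z})}"
proof -
  obtain a b where ab: "(\<lambda>x. x + a) ` X = (\<lambda>x. x + b) ` Y" using tr unfolding translates_def by blast
  define \<phi> where "\<phi> z = z + a - b" for z
  have ge: "b \<le> z + a" if "z \<in> X" for z using ab that by (metis imageI imageE le_add2)
  have "\<phi> ` X = (\<lambda>w. w - b) ` (\<lambda>x. x + a) ` X" unfolding \<phi>_def by (simp add: image_image)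
  then have img: "\<phi> ` X = Y" unfolding ab by (simp add: image_image)
  have inj: "inj_on \<phi> X"
  proof
    fix x y assume "x \<in> X" "y \<in> X" "\<phi> x = \<phi> y"
    then show "x = y" using ge[of x] ge[of y] unfolding \<phi>_def by arith
  qed
  have "translates (X - {z}) (Y - {\<phi> z})" if "z \<in> X" for z
    unfolding translates_def \<phi>_def using image_add_remove[OF ab that] by blast
  then have "translates A (Y - {\<phi> z}) \<longleftrightarrow> translates A (X - {z})" if "z \<in> X" for z
    using that translates_trans translates_sym by blast
  then have "{y \<in> Y. translates A (Y - {y})} = \<phi> ` {z \<in> X. translates A (X - {z})}"
    unfolding img[symmetric] by auto
  then show ?thesis using inj by (simp add: card_image inj_on_subset)
qed

definition translate_class :: "nat list \<Rightarrow> nat set \<Rightarrow> nat list set" where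
  "translate_class s Y = {t \<in> permutations_of_set Y. suffix_translates s t}"

lemma translate_class_Cons:
  assumes "translates (set (x # s)) Y"
  shows "translate_class (x # s) Y =
    (\<Union>y\<in>{y \<in> Y. translates (set s) (Y - {y})}. (#) y ` translate_class s (Y - {y}))"
proof (intro equalityI subsetI)
  fix t assume t: "t \<in> translate_class (x # s) Y"
  then obtain y t' where t_eq: "t = y # t'"
    unfolding translate_class_def suffix_translates_def by (cases t) auto
  with t have y: "y \<in> Y" "set t' = Y - {y}" "distinct t'" "suffix_translates s t'"
    unfolding translate_class_def permutations_of_set_def by (auto simp: suffix_translates_Cons)
  then have "translates (set s) (Y - {y})" unfolding suffix_translates_def by (metis drop0)
  moreover have "t' \<in> translate_class s (Y - {y})"
    using y unfolding translate_class_def permutations_of_set_def by simp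
  ultimately show "t \<in> (\<Union>y\<in>{y \<in> Y. translates (set s) (Y - {y})}. (#) y ` translate_class s (Y - {y}))"
    using y(1) t_eq by blast
next
  fix t assume "t \<in> (\<Union>y\<in>{y \<in> Y. translates (set s) (Y - {y})}. (#) y ` translate_class s (Y - {y}))"
  then obtain y t' where "y \<in> Y" "t' \<in> translate_class s (Y - {y})" "t = y # t'" by blast
  then have "set t = Y" "distinct t" "suffix_translates s t'"
    unfolding translate_class_def permutations_of_set_def by auto
  then show "t \<in> translate_class (x # s) Y"
    using assms \<open>t = y # t'\<close> unfolding translate_class_def permutations_of_set_def
    by (simp add: suffix_translates_Cons)
qed

lemma card_translate_class:
  "distinct s \<Longrightarrow> translates (set s) Y \<Longrightarrow>
    card (translate_class s Y) = (\<Prod>i<length s. card (removal_partners (set (drop i s)) (s ! i)))"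
proof (induction s arbitrary: Y)
  case Nil
  then have "Y = {}" using translates_empty by simp
  then have "translate_class [] Y = {[]}"
    unfolding translate_class_def suffix_translates_def by (auto simp: translates_refl)
  then show ?case by simp
next
  case (Cons x s)
  define C where "C = {y \<in> Y. translates (set s) (Y - {y})}"
  have fin: "finite Y" using translates_finite[OF Cons.prems(2)] by simp
  have "card (translate_class (x # s) Y) = (\<Sum>y\<in>C. card ((#) y ` translate_class s (Y - {y})))"
    unfolding translate_class_Cons[OF Cons.prems(2)] C_def[symmetric] using fin
    by (intro card_UN_disjoint) (auto simp: C_def translate_class_def)
  also have "\<dots> = card C * (\<Prod>i<length s. card (removal_partners (set (drop i s)) (s ! i)))"
    using Cons.IH Cons.prems(1) by (simp add: C_def card_image)
  also have "card C = card (removal_partners (set (x # s)) x)"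
    unfolding C_def removal_partners_def card_translated_removals[OF Cons.prems(2)]
    using Cons.prems(1) by (simp add: insert_Diff_if)
  finally show ?case unfolding length_Cons prod.lessThan_Suc_shift by simp
qed

lemma card_ss_wilf_class:
  assumes u: "u \<in> perms n"
  shows "card {v \<in> perms n. ss_wilf u v} =
    (\<Prod>m\<in>{1..n}. card (removal_partners (upper_set u m) (position u m)))"
proof -
  define s where "s = positions u"
  have s: "s \<in> permutations_of_set {..<n}" "length s = n"
    unfolding s_def using positions_in_permutations[OF u] length_positions length_perm[OF u] by auto
  have class_eq: "{v \<in> perms n. ss_wilf u v} = {v \<in> perms n. suffix_translates s (positions v)}"
    unfolding s_def using ss_wilf_iff_suffix_translates[OF u] by blast
  have "positions ` {v \<in> perms n. suffix_translates s (positions v)} =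
      {t \<in> positions ` perms n. suffix_translates s t}" by auto
  then have "positions ` {v \<in> perms n. suffix_translates s (positions v)} = translate_class s {..<n}"
    unfolding translate_class_def positions_image .
  moreover have "inj_on positions {v \<in> perms n. suffix_translates s (positions v)}"
    using positions_injective[of n] by (rule inj_on_subset) simp
  ultimately have "card {v \<in> perms n. ss_wilf u v} = card (translate_class s {..<n})"
    unfolding class_eq by (metis card_image)
  also have "\<dots> = (\<Prod>i<n. card (removal_partners (set (drop i s)) (s ! i)))"
  proof -
    have "distinct s" "set s = {..<n}" using permutations_of_setD[OF s(1)] by auto
    then show ?thesis using card_translate_class[of s "{..<n}"] s(2) translates_refl by simp
  qed
  also have "\<dots> = (\<Prod>i<n. card (removal_partners (upper_set u (Suc i)) (position u (Suc i))))"
    unfolding s_def using set_drop_positions[OF u] nth_positions length_perm[OF u] by simp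
  finally show ?thesis by (simp add: prod.atLeast1_atMost_eq)
qed

lemma upper_set_remove_position:
  assumes u: "u \<in> perms n" and m: "1 \<le> m" "m \<le> n"
  shows "position u m \<in> upper_set u m" "upper_set u m - {position u m} = upper_set u (Suc m)"
  using position_bounds[OF u m] position_nth[OF u] length_perm[OF u]
  unfolding upper_set_def by (auto simp: le_less)

lemma card_removal_partners_upper_set:
  assumes u: "u \<in> perms n" and m: "1 \<le> m" "m \<le> n"
  shows "card (removal_partners (upper_set u m) (position u m)) =
    (if m < n \<and> (\<exists>d>0. Delta (upper_set u m) = replicate (n - m) d \<and>
        Delta (upper_set u (Suc m)) = replicate (n - m - 1) d) then 2 else 1)"
proof -
  note pos = upper_set_remove_position[OF u m]
  have fin: "finite (upper_set u m)" unfolding upper_set_def by simp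
  have card: "card (upper_set u m) = n + 1 - m" using card_upper_set[OF u m(1)] .
  show ?thesis
  proof (cases "m < n")
    case True
    then show ?thesis
      using card_removal_partners[OF fin pos(1)] progression_end_iff_Delta[OF fin pos(1)] card pos(2)
      by simp
  next
    case False
    then show ?thesis
      using card_removal_partners[OF fin pos(1)] progression_end_card[of "upper_set u m"] card m by auto
  qed
qed

theorem mainTheorem3:
  fixes n :: nat and u :: "nat list"
  assumes "n \<ge> 2" and "u \<in> perms n"
  defines "D \<equiv> (\<lambda>i. if i = n then [] else pvec (perm_inv u) ! (i - 1))"
  shows "card {v \<in> perms n. ss_wilf u v} =
         2 ^ card {i \<in> {1..n-1}. \<exists>d>0. D i = replicate (n - i) d \<and>
                                          D (i + 1) = replicate (n - i - 1) d}"
proof -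
  note u = assms(2)
  define C where "C i \<longleftrightarrow> (\<exists>d>0. D i = replicate (n - i) d \<and> D (i + 1) = replicate (n - i - 1) d)" for i
  define f where "f m = card (removal_partners (upper_set u m) (position u m))" for m
  have D: "D i = Delta (upper_set u i)" if "1 \<le> i" "i \<le> n" for i
    using pvec_perm_inv[OF u, of i] that card_upper_set[OF u, of n] unfolding D_def
    by (auto simp: Delta_def Let_def)
  have factor: "f m = (if C m then 2 else 1)" if "m \<in> {1..n-1}" for m
  proof -
    have m: "1 \<le> m" "m < n" using that assms(1) by auto
    then have "C m \<longleftrightarrow> (\<exists>d>0. Delta (upper_set u m) = replicate (n - m) d \<and>
        Delta (upper_set u (Suc m)) = replicate (n - m - 1) d)"
      unfolding C_def using D[of m] D[of "Suc m"] by simp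
    then show ?thesis using card_removal_partners_upper_set[OF u m(1)] m(2) unfolding f_def by simp
  qed
  have "f n = 1"
    using card_removal_partners_upper_set[OF u, of n] assms(1) unfolding f_def by simp
  moreover have "{1..n} = insert n {1..n-1}" "n \<notin> {1..n-1}" using assms(1) by auto
  ultimately have "(\<Prod>m\<in>{1..n}. f m) = (\<Prod>m\<in>{1..n-1}. f m)" by simp
  also have "\<dots> = (\<Prod>m\<in>{1..n-1}. if C m then 2 else 1)" using factor by (rule prod.cong[OF refl])
  also have "\<dots> = 2 ^ card {i \<in> {1..n-1}. C i}" by (simp add: prod.If_cases Int_def)
  finally show ?thesis using card_ss_wilf_class[OF u] unfolding f_def C_def by simp
qed

end
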